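(* Let $n=T+1-t$. (i) The value $\tilde{V}_n^2(p_t,\nu_t)$ of the $n$-stage type 2 dual game $\tilde{\Gamma}_n^2(p_t,\nu_t)$ satisfies \[ \tilde{V}_n^2(p_t,\nu_t)=\max_{x\in X,\,u\in U,\,u_{:,0}\in\mathbb{R}^{|L|},\,\tilde{u}\in\mathbb{R}}\ \tilde{u} \] subject to \[ u_{:,0}+\nu_t\geq \tilde{u}\mathbf{1}, \] \[ \sum_{k\in K}{M^{kl}}^Tx_{k,h_1^A,h_1^B}+{u_{l,h_1^A,h_1^B}}^T\mathbf{1} \geq u_{l,0} \mathbf{1},\quad \forall l\in L, \] \[ \sum_{k\in K}{M^{kl}}^Tx_{k,h_{s+1}^A,h_{s+1}^B}+{u_{l,h_{s+1}^A,h_{s+1}^B}}^T\mathbf{1} \geq u_{l,h_{s}^A,h_{s}^B}^{a_{s},b_{s}}\mathbf{1},\quad \forall s=1,\ldots,n-1,\ l\in L,\ h_s^A\in H_s^A,\ h_s^B\in H_s^B, \] where $h_{s+1}^A=(h_s^A,a_s)$, $h_{s+1}^B=(h_s^B,b_s)$ (concatenation), $u_{l,h_n^A,h_n^B}$ is the zero matrix for all $l\in L$, $X$ is the set of player 1's realization plans (vectors satisfying $\mathbf{1}^T x_{k,h_s^A,h_s^B}=x_{k,h_{s-1}^A,h_{s-1}^B}^{a_{s-1}}$ and $x_{k,h_s^A,h_s^B}\geq\mathbf{0}$ for all $s,k,h_s^A,h_s^B$) with $x_{k,h_0^A,h_0^B}^{a_0}=p^k_t$, and $U$ is a real space of appropriate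 dimension. Player 1's security strategy at stage $t$ in the type 2 dual game is \[ \tilde{\sigma}^{*}_t(k,p_t,\nu_t)=\frac{x_{k,h_1^A,h_1^B}^{*}}{p^k_t}, \] where $x^*$ is an optimal solution of this LP. (ii) Similarly, for the type 1 dual game $\tilde{\Gamma}_T^1(\mu,q)$, with $\mu_t$ the regret on player 1's type and $q_t$ the belief on player 2's type at stage $t$, the value $\tilde{V}_n^1(\mu_t,q_t)$ of the $n$-stage type 1 dual game $\tilde{\Gamma}_n^1(\mu_t,q_t)$ satisfies \[ \tilde{V}_n^1(\mu_t,q_t)=\min_{y\in Y,\,w\in W,\,w_{:,0}\in\mathbb{R}^{|K|},\,\tilde{w}\in\mathbb{R}}\ \tilde{w} \] subject to \[ w_{:,0}+\mu_t \leq \tilde{w}\mathbf{1}, \] \[ \sum_{l\in L} M^{kl} y_{l,h_1^A,h_1^B}+w_{k,h_1^A,h_1^B}\mathbf{1} \leq w_{k,0}\mathbf{1},\quad\forall k\in K, \] \[ \sum_{l\in L} M^{kl} y_{l,h_{s+1}^A,h_{s+1}^B}+w_{k,h_{s+1}^A,h_{s+1}^B}\mathbf{1} \leq w_{k,h_{s}^A,h_{s}^B}^{a_{s},b_{s}}\mathbf{1},\quad\forall s=1,\ldots,n-1,\ k\in K,\ h_s^A\in H_s^A,\ h_s^B\in H_s^B, \] where $w_{k,h_n^A,h_n^B}$ is the zero matrix for all $k\in K$, $Y$ is the set of player 2's realization plans (vectors satisfying $\mathbf{1}^T y_{l,h_s^A,h_s^B}=y_{l,h_{s-1}^A,h_{s-1}^B}^{b_{s-1}}$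 and $y_{l,h_s^A,h_s^B}\geq\mathbf{0}$) with $y_{l,h_0^A,h_0^B}^{b_0}=q^l_t$, and $W$ is a real space of appropriate dimension. Player 2's security strategy at stage $t$ in the type 1 dual game is \[ \tilde{\tau}^*_t(l,\mu_t,q_t)=\frac{y_{l,h_1^A,h_1^B}^*}{q^l_t}. \]
   Context: A two-player zero-sum $T$-stage repeated Bayesian game is given by finite type sets $K$ (player 1, maximizer) and $L$ (player 2, minimizer), finite action sets $A,B$, payoff matrices $M^{kl}\in\mathbb{R}^{|A|\times|B|}$ with entries $M^{kl}_{a,b}=M(k,l,a,b)$, and initial type distributions $p\in\Delta(K)$, $q\in\Delta(L)$; types are fixed, actions are announced publicly each stage, and the payoff is $\mathbb{E}\sum_{t=1}^T M(k,l,a_t,b_t)$. History action sequences are $h_s^A\in H_s^A=A^{s-1}$, $h_s^B\in H_s^B=B^{s-1}$. A realization plan of player 1 is $x_{k,h_s^A,h_s^B}^{a_s}=p^k\prod_{r=1}^s\sigma_r^{a_r}(k,h_r^A,h_r^B)$ (vector $x_{k,h_s^A,h_s^B}\in\mathbb{R}^{|A|}$), and of player 2 is $y_{l,h_s^A,h_s^B}^{b_s}=q^l\prod_{r=1}^s\tau_r^{b_r}(l,h_r^A,h_r^B)$; the variables $u_{l,h_s^A,h_s^B}$, $w_{k,h_s^A,h_s^B}$ are $|A|\times|B|$ matrices and $u_{l,0}$, $w_{k,0}$ scalars. In the type 2 dual game $\tilde{\Gamma}_T^2(p,\nu)$ with $\nu\in\mathbb{R}^{|L|}$, player 2 chooses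 his own type $l$ (by a distribution $q$) without informing player 1, player 1's type is drawn from $p$, and player 1's payoff is $\mathbb{E}(\nu^l+\sum_{t=1}^T M(k,l,a_t,b_t))$. In the type 1 dual game $\tilde{\Gamma}_T^1(\mu,q)$ with $\mu\in\mathbb{R}^{|K|}$, player 1 chooses his own type $k$ himself, player 2's type is drawn from $q$, and the payoff is $\mathbb{E}(\mu^k+\sum_{t=1}^T M(k,l,a_t,b_t))$. In the type 2 dual game, $p_t$ is the belief on player 1's type ($p_t^k=P(k\mid l,h_t^A,h_t^B)$, updated by Bayes' rule with $p_1=p$) and $\nu_t$ is the regret on player 2's type ($\nu_{t+1}^l=\nu_t^l+\sum_{k}p_{t+1}^kM^{kl}_{a_t,b_t}$, $\nu_1=\nu$); analogously in the type 1 dual game, $q_t$ is the belief on player 2's type and $\mu_{t+1}^k=\mu_t^k+\sum_l q_{t+1}^lM^{kl}_{a_t,b_t}$, $\mu_1=\mu$. *)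

theory Defs
  imports Complex_Main
begin

text \<open>Types: 'k (player 1), 'l (player 2); actions: 'a (player 1), 'b (player 2).
  A history of stage s (s = 1,2,...) is a pair (ha, hb) of action lists of length s - 1.
  Payoff data: M k l a b.\<close>

definition simplex :: "('i::finite \<Rightarrow> real) \<Rightarrow> bool" where
  "simplex p \<longleftrightarrow> (\<forall>i. 0 \<le> p i) \<and> (\<Sum>i\<in>UNIV. p i) = 1"

definition stoch1 :: "nat \<Rightarrow> ('k \<Rightarrow> 'a list \<Rightarrow> 'b list \<Rightarrow> 'a::finite \<Rightarrow> real) \<Rightarrow> bool" where
  "stoch1 n \<sigma> \<longleftrightarrow> (\<forall>k ha hb. length ha = length hb \<and> length ha < n \<longrightarrow>
      (\<forall>a. 0 \<le> \<sigma> k ha hb a) \<and> (\<Sum>a\<in>UNIV. \<sigma> k ha hb a) = 1)"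

definition stoch2 :: "nat \<Rightarrow> ('l \<Rightarrow> 'a list \<Rightarrow> 'b list \<Rightarrow> 'b::finite \<Rightarrow> real) \<Rightarrow> bool" where
  "stoch2 n \<tau> \<longleftrightarrow> (\<forall>l ha hb. length ha = length hb \<and> length ha < n \<longrightarrow>
      (\<forall>b. 0 \<le> \<tau> l ha hb b) \<and> (\<Sum>b\<in>UNIV. \<tau> l ha hb b) = 1)"

definition histories :: "nat \<Rightarrow> ('a list \<times> 'b list) set" where
  "histories m = {(ha, hb). length ha = m \<and> length hb = m}"

definition reach ::
  "('k \<Rightarrow> 'a list \<Rightarrow> 'b list \<Rightarrow> 'a \<Rightarrow> real) \<Rightarrow> ('l \<Rightarrow> 'a list \<Rightarrow> 'b list \<Rightarrow> 'b \<Rightarrow> real)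
   \<Rightarrow> 'k \<Rightarrow> 'l \<Rightarrow> 'a list \<Rightarrow> 'b list \<Rightarrow> real" where
  "reach \<sigma> \<tau> k l ha hb =
     (\<Prod>r<length ha. \<sigma> k (take r ha) (take r hb) (ha ! r) * \<tau> l (take r ha) (take r hb) (hb ! r))"

definition cond_payoff ::
  "('k \<Rightarrow> 'l \<Rightarrow> 'a \<Rightarrow> 'b \<Rightarrow> real) \<Rightarrow> nat
   \<Rightarrow> ('k \<Rightarrow> 'a list \<Rightarrow> 'b list \<Rightarrow> 'a \<Rightarrow> real) \<Rightarrow> ('l \<Rightarrow> 'a list \<Rightarrow> 'b list \<Rightarrow> 'b \<Rightarrow> real)
   \<Rightarrow> 'k \<Rightarrow> 'l \<Rightarrow> real" where
  "cond_payoff M n \<sigma> \<tau> k l =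
     (\<Sum>h\<in>histories n. reach \<sigma> \<tau> k l (fst h) (snd h) *
         (\<Sum>r<n. M k l (fst h ! r) (snd h ! r)))"

text \<open>Player 2 chooses his type by q (unobserved by player 1) and a strategy \<tau>;
  player 1's type is drawn from p. Player 1's payoff: E(\<nu>^l + sum M).\<close>
definition dual2_payoff ::
  "('k::finite \<Rightarrow> 'l::finite \<Rightarrow> 'a \<Rightarrow> 'b \<Rightarrow> real) \<Rightarrow> nat \<Rightarrow> ('k \<Rightarrow> real) \<Rightarrow> ('l \<Rightarrow> real)
   \<Rightarrow> ('k \<Rightarrow> 'a list \<Rightarrow> 'b list \<Rightarrow> 'a \<Rightarrow> real) \<Rightarrow> ('l \<Rightarrow> real)
   \<Rightarrow> ('l \<Rightarrow> 'a list \<Rightarrow> 'b list \<Rightarrow> 'b \<Rightarrow> real) \<Rightarrow> real" where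
  "dual2_payoff M n p \<nu> \<sigma> q \<tau> =
     (\<Sum>l\<in>UNIV. q l * (\<nu> l + (\<Sum>k\<in>UNIV. p k * cond_payoff M n \<sigma> \<tau> k l)))"

definition dual2_guarantee ::
  "('k::finite \<Rightarrow> 'l::finite \<Rightarrow> 'a::finite \<Rightarrow> 'b::finite \<Rightarrow> real) \<Rightarrow> nat \<Rightarrow> ('k \<Rightarrow> real) \<Rightarrow> ('l \<Rightarrow> real)
   \<Rightarrow> ('k \<Rightarrow> 'a list \<Rightarrow> 'b list \<Rightarrow> 'a \<Rightarrow> real) \<Rightarrow> real" where
  "dual2_guarantee M n p \<nu> \<sigma> =
     (INF qt\<in>{(q, \<tau>). simplex q \<and> stoch2 n \<tau>}. dual2_payoff M n p \<nu> \<sigma> (fst qt) (snd qt))"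

text \<open>Value (lower value = max-min; the theorem also asserts it equals the upper value).\<close>
definition dual2_value ::
  "('k::finite \<Rightarrow> 'l::finite \<Rightarrow> 'a::finite \<Rightarrow> 'b::finite \<Rightarrow> real) \<Rightarrow> nat \<Rightarrow> ('k \<Rightarrow> real) \<Rightarrow> ('l \<Rightarrow> real) \<Rightarrow> real" where
  "dual2_value M n p \<nu> = (SUP \<sigma>\<in>{\<sigma>. stoch1 n \<sigma>}. dual2_guarantee M n p \<nu> \<sigma>)"

definition dual2_upper_value ::
  "('k::finite \<Rightarrow> 'l::finite \<Rightarrow> 'a::finite \<Rightarrow> 'b::finite \<Rightarrow> real) \<Rightarrow> nat \<Rightarrow> ('k \<Rightarrow> real) \<Rightarrow> ('l \<Rightarrow> real) \<Rightarrow> real" where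
  "dual2_upper_value M n p \<nu> =
     (INF qt\<in>{(q, \<tau>). simplex q \<and> stoch2 n \<tau>}.
        SUP \<sigma>\<in>{\<sigma>. stoch1 n \<sigma>}. dual2_payoff M n p \<nu> \<sigma> (fst qt) (snd qt))"

definition dual2_security_strategy ::
  "('k::finite \<Rightarrow> 'l::finite \<Rightarrow> 'a::finite \<Rightarrow> 'b::finite \<Rightarrow> real) \<Rightarrow> nat \<Rightarrow> ('k \<Rightarrow> real) \<Rightarrow> ('l \<Rightarrow> real)
   \<Rightarrow> ('k \<Rightarrow> 'a list \<Rightarrow> 'b list \<Rightarrow> 'a \<Rightarrow> real) \<Rightarrow> bool" where
  "dual2_security_strategy M n p \<nu> \<sigma> \<longleftrightarrow>
     stoch1 n \<sigma> \<and> dual2_guarantee M n p \<nu> \<sigma> = dual2_value M n p \<nu>"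

text \<open>Player 1 chooses his own type by a distribution \<pi> and a strategy \<sigma>;
  player 2's type is drawn from q. Player 1's payoff: E(\<mu>^k + sum M).\<close>
definition dual1_payoff ::
  "('k::finite \<Rightarrow> 'l::finite \<Rightarrow> 'a \<Rightarrow> 'b \<Rightarrow> real) \<Rightarrow> nat \<Rightarrow> ('k \<Rightarrow> real) \<Rightarrow> ('l \<Rightarrow> real)
   \<Rightarrow> ('k \<Rightarrow> real) \<Rightarrow> ('k \<Rightarrow> 'a list \<Rightarrow> 'b list \<Rightarrow> 'a \<Rightarrow> real)
   \<Rightarrow> ('l \<Rightarrow> 'a list \<Rightarrow> 'b list \<Rightarrow> 'b \<Rightarrow> real) \<Rightarrow> real" where
  "dual1_payoff M n \<mu> q \<pi> \<sigma> \<tau> =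
     (\<Sum>k\<in>UNIV. \<pi> k * (\<mu> k + (\<Sum>l\<in>UNIV. q l * cond_payoff M n \<sigma> \<tau> k l)))"

definition dual1_guarantee ::
  "('k::finite \<Rightarrow> 'l::finite \<Rightarrow> 'a::finite \<Rightarrow> 'b::finite \<Rightarrow> real) \<Rightarrow> nat \<Rightarrow> ('k \<Rightarrow> real) \<Rightarrow> ('l \<Rightarrow> real)
   \<Rightarrow> ('l \<Rightarrow> 'a list \<Rightarrow> 'b list \<Rightarrow> 'b \<Rightarrow> real) \<Rightarrow> real" where
  "dual1_guarantee M n \<mu> q \<tau> =
     (SUP ps\<in>{(\<pi>, \<sigma>). simplex \<pi> \<and> stoch1 n \<sigma>}. dual1_payoff M n \<mu> q (fst ps) (snd ps) \<tau>)"

text \<open>Value (upper value = min-max; the theorem also asserts it equals the lower value).\<close>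
definition dual1_value ::
  "('k::finite \<Rightarrow> 'l::finite \<Rightarrow> 'a::finite \<Rightarrow> 'b::finite \<Rightarrow> real) \<Rightarrow> nat \<Rightarrow> ('k \<Rightarrow> real) \<Rightarrow> ('l \<Rightarrow> real) \<Rightarrow> real" where
  "dual1_value M n \<mu> q = (INF \<tau>\<in>{\<tau>. stoch2 n \<tau>}. dual1_guarantee M n \<mu> q \<tau>)"

definition dual1_lower_value ::
  "('k::finite \<Rightarrow> 'l::finite \<Rightarrow> 'a::finite \<Rightarrow> 'b::finite \<Rightarrow> real) \<Rightarrow> nat \<Rightarrow> ('k \<Rightarrow> real) \<Rightarrow> ('l \<Rightarrow> real) \<Rightarrow> real" where
  "dual1_lower_value M n \<mu> q =
     (SUP ps\<in>{(\<pi>, \<sigma>). simplex \<pi> \<and> stoch1 n \<sigma>}.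
        INF \<tau>\<in>{\<tau>. stoch2 n \<tau>}. dual1_payoff M n \<mu> q (fst ps) (snd ps) \<tau>)"

definition dual1_security_strategy ::
  "('k::finite \<Rightarrow> 'l::finite \<Rightarrow> 'a::finite \<Rightarrow> 'b::finite \<Rightarrow> real) \<Rightarrow> nat \<Rightarrow> ('k \<Rightarrow> real) \<Rightarrow> ('l \<Rightarrow> real)
   \<Rightarrow> ('l \<Rightarrow> 'a list \<Rightarrow> 'b list \<Rightarrow> 'b \<Rightarrow> real) \<Rightarrow> bool" where
  "dual1_security_strategy M n \<mu> q \<tau> \<longleftrightarrow>
     stoch2 n \<tau> \<and> dual1_guarantee M n \<mu> q \<tau> = dual1_value M n \<mu> q"

text \<open>Realization plans.  x k ha hb a  is  x^a_{k,h^A_s,h^B_s}  where length ha = length hb = s - 1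
  (s = 1..n); the parent of (ha, hb) at stage s = 1 is the prior weight p^k.\<close>
definition realization_plan1 ::
  "nat \<Rightarrow> ('k \<Rightarrow> real) \<Rightarrow> ('k \<Rightarrow> 'a list \<Rightarrow> 'b list \<Rightarrow> 'a::finite \<Rightarrow> real) \<Rightarrow> bool" where
  "realization_plan1 n p x \<longleftrightarrow>
     (\<forall>k ha hb. length ha = length hb \<and> length ha < n \<longrightarrow>
        (\<forall>a. 0 \<le> x k ha hb a) \<and>
        (\<Sum>a\<in>UNIV. x k ha hb a) =
          (if ha = [] then p k else x k (butlast ha) (butlast hb) (last ha)))"

definition realization_plan2 ::
  "nat \<Rightarrow> ('l \<Rightarrow> real) \<Rightarrow> ('l \<Rightarrow> 'a list \<Rightarrow> 'b list \<Rightarrow> 'b::finite \<Rightarrow> real) \<Rightarrow> bool" where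
  "realization_plan2 n q y \<longleftrightarrow>
     (\<forall>l ha hb. length ha = length hb \<and> length ha < n \<longrightarrow>
        (\<forall>b. 0 \<le> y l ha hb b) \<and>
        (\<Sum>b\<in>UNIV. y l ha hb b) =
          (if hb = [] then q l else y l (butlast ha) (butlast hb) (last hb)))"

text \<open>Feasibility for the LP of part (i), with objective value ut.
  u l ha hb a b is the (a,b) entry of the matrix u_{l,h^A,h^B}; u0 l is u_{l,0}.\<close>
definition lp2_feasible ::
  "('k::finite \<Rightarrow> 'l::finite \<Rightarrow> 'a::finite \<Rightarrow> 'b::finite \<Rightarrow> real) \<Rightarrow> nat \<Rightarrow> ('k \<Rightarrow> real) \<Rightarrow> ('l \<Rightarrow> real)
   \<Rightarrow> ('k \<Rightarrow> 'a list \<Rightarrow> 'b list \<Rightarrow> 'a \<Rightarrow> real) \<Rightarrow> ('l \<Rightarrow> 'a list \<Rightarrow> 'b list \<Rightarrow> 'a \<Rightarrow> 'b \<Rightarrow> real)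
   \<Rightarrow> ('l \<Rightarrow> real) \<Rightarrow> real \<Rightarrow> bool" where
  "lp2_feasible M n p \<nu> x u u0 ut \<longleftrightarrow>
     realization_plan1 n p x \<and>
     (\<forall>l ha hb a b. length ha = n - 1 \<and> length hb = n - 1 \<longrightarrow> u l ha hb a b = 0) \<and>
     (\<forall>l. u0 l + \<nu> l \<ge> ut) \<and>
     (\<forall>l b. (\<Sum>a\<in>UNIV. (\<Sum>k\<in>UNIV. M k l a b * x k [] [] a) + u l [] [] a b) \<ge> u0 l) \<and>
     (\<forall>s l ha hb as bs b. 1 \<le> s \<and> s \<le> n - 1 \<and> length ha = s - 1 \<and> length hb = s - 1 \<longrightarrow>
        (\<Sum>a\<in>UNIV. (\<Sum>k\<in>UNIV. M k l a b * x k (ha @ [as]) (hb @ [bs]) a)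
                     + u l (ha @ [as]) (hb @ [bs]) a b) \<ge> u l ha hb as bs)"

definition lp1_feasible ::
  "('k::finite \<Rightarrow> 'l::finite \<Rightarrow> 'a::finite \<Rightarrow> 'b::finite \<Rightarrow> real) \<Rightarrow> nat \<Rightarrow> ('k \<Rightarrow> real) \<Rightarrow> ('l \<Rightarrow> real)
   \<Rightarrow> ('l \<Rightarrow> 'a list \<Rightarrow> 'b list \<Rightarrow> 'b \<Rightarrow> real) \<Rightarrow> ('k \<Rightarrow> 'a list \<Rightarrow> 'b list \<Rightarrow> 'a \<Rightarrow> 'b \<Rightarrow> real)
   \<Rightarrow> ('k \<Rightarrow> real) \<Rightarrow> real \<Rightarrow> bool" where
  "lp1_feasible M n \<mu> q y w w0 wt \<longleftrightarrow>
     realization_plan2 n q y \<and>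
     (\<forall>k ha hb a b. length ha = n - 1 \<and> length hb = n - 1 \<longrightarrow> w k ha hb a b = 0) \<and>
     (\<forall>k. w0 k + \<mu> k \<le> wt) \<and>
     (\<forall>k a. (\<Sum>b\<in>UNIV. (\<Sum>l\<in>UNIV. M k l a b * y l [] [] b) + w k [] [] a b) \<le> w0 k) \<and>
     (\<forall>s k ha hb as bs a. 1 \<le> s \<and> s \<le> n - 1 \<and> length ha = s - 1 \<and> length hb = s - 1 \<longrightarrow>
        (\<Sum>b\<in>UNIV. (\<Sum>l\<in>UNIV. M k l a b * y l (ha @ [as]) (hb @ [bs]) b)
                     + w k (ha @ [as]) (hb @ [bs]) a b) \<le> w k ha hb as bs)"

text \<open>Where the parent weight is 0 (unreachable
  history) the strategy is uniform.\<close>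
definition strategy_of_plan1 ::
  "('k \<Rightarrow> real) \<Rightarrow> ('k \<Rightarrow> 'a list \<Rightarrow> 'b list \<Rightarrow> 'a::finite \<Rightarrow> real)
   \<Rightarrow> 'k \<Rightarrow> 'a list \<Rightarrow> 'b list \<Rightarrow> 'a \<Rightarrow> real" where
  "strategy_of_plan1 p x k ha hb a =
     (let w = (if ha = [] then p k else x k (butlast ha) (butlast hb) (last ha))
      in if w > 0 then x k ha hb a / w else 1 / real (card (UNIV :: 'a set)))"

definition strategy_of_plan2 ::
  "('l \<Rightarrow> real) \<Rightarrow> ('l \<Rightarrow> 'a list \<Rightarrow> 'b list \<Rightarrow> 'b::finite \<Rightarrow> real)
   \<Rightarrow> 'l \<Rightarrow> 'a list \<Rightarrow> 'b list \<Rightarrow> 'b \<Rightarrow> real" where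
  "strategy_of_plan2 q y l ha hb b =
     (let w = (if hb = [] then q l else y l (butlast ha) (butlast hb) (last hb))
      in if w > 0 then y l ha hb b / w else 1 / real (card (UNIV :: 'b set)))"

end

theory Submission
  imports Defs "HOL-Analysis.Function_Topology"
begin

text \<open>Realization plans turn the payoff of the type 2 dual game into a function that is affine
  in player 1's plan x and in player 2's plan y; player 1's plans form a compact convex set and
  player 2's plans (with his type distribution free) a convex set. A minimax theorem for such
  functions, proved by the connectedness argument behind Sion's theorem, gives the value and a
  plan of player 1 guaranteeing it. Summing the LP constraints against a plan y of player 2
  telescopes the payoff into \<open>\<nu>^l + u_{l,0}\<close> plus nonnegative slack, so every
  feasible objective value is guaranteed by the strategy induced by x; conversely, backward
  induction for player 2's best reply yields multipliers u under which the guarantee of any plan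
  is feasible. Part (ii) is part (i) for the game with the roles of the players exchanged and the
  payoff negated.\<close>

section \<open>A minimax theorem for biaffine functions\<close>

lemma convex_comb_gt:
  fixes a b \<alpha> t :: real
  assumes "\<alpha> < a" "\<alpha> < b" "t \<in> {0..1}"
  shows "\<alpha> < (1 - t) * a + t * b"
proof -
  have "0 < (1 - t) * (a - \<alpha>) + t * (b - \<alpha>)"
  proof (cases "t = 0")
    case False
    then have "0 < t * (b - \<alpha>)" using assms by (simp add: zero_less_mult_iff)
    moreover have "0 \<le> (1 - t) * (a - \<alpha>)" using assms by simp
    ultimately show ?thesis by linarith
  qed (use assms in simp)
  then show ?thesis by (simp add: algebra_simps)
qed

lemma convex_comb_le:
  fixes a b \<alpha> t :: real
  assumes "a \<le> \<alpha>" "b \<le> \<alpha>" "t \<in> {0..1}"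
  shows "(1 - t) * a + t * b \<le> \<alpha>"
proof -
  have "(1 - t) * (a - \<alpha>) \<le> 0" "t * (b - \<alpha>) \<le> 0"
    using assms by (simp_all add: mult_nonneg_nonpos)
  then show ?thesis by (simp add: algebra_simps)
qed

lemma unit_interval_no_switch:
  fixes g h :: "real \<Rightarrow> real"
  assumes "continuous_on UNIV g" "continuous_on UNIV h"
    and "\<forall>s\<in>{0..1}. g s > 0 \<longleftrightarrow> \<not> h s > 0"
    and "g 0 > 0" "h 1 > 0"
  shows False
proof -
  have "{s. g s > 0} \<inter> {0..1} = {} \<or> {s. h s > 0} \<inter> {0..1} = {}"
    by (rule connectedD[OF connected_Icc]) (use assms in \<open>auto intro: open_Collect_less continuous_intros\<close>)
  then show False using assms(4,5) by auto
qed

text \<open>Convexity is expressed through arbitrary mixing operators cx and cy, so X and Y need not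
  lie in a real vector space.\<close>

lemma affine_segment_crossing:
  fixes F :: "'x \<Rightarrow> 'y \<Rightarrow> real"
  assumes cvX: "\<forall>x1\<in>X. \<forall>x2\<in>X. \<forall>s\<in>{0..1}. cx s x1 x2 \<in> X"
    and affX: "\<forall>x1\<in>X. \<forall>x2\<in>X. \<forall>s\<in>{0..1}. \<forall>y\<in>Y. F (cx s x1 x2) y = (1-s)*F x1 y + s*F x2 y"
    and y: "y1 \<in> Y" "y2 \<in> Y"
    and sep: "\<forall>x\<in>X. F x y1 \<le> \<alpha> \<or> F x y2 \<le> \<alpha>"
    and xa: "xa \<in> X" "\<alpha> < F xa y1" "\<alpha> < (1-t)*F xa y1 + t*F xa y2"
    and xb: "xb \<in> X" "\<alpha> < F xb y2" "\<alpha> < (1-t)*F xb y1 + t*F xb y2"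
    and t: "t \<in> {0..1}"
  shows False
proof (rule unit_interval_no_switch)
  define g where "g s = (1-s)*F xa y1 + s*F xb y1 - \<alpha>" for s
  define h where "h s = (1-s)*F xa y2 + s*F xb y2 - \<alpha>" for s
  show "continuous_on UNIV g" "continuous_on UNIV h"
    unfolding g_def h_def by (intro continuous_intros)+
  show "g 0 > 0" "h 1 > 0" using xa xb by (simp_all add: g_def h_def)
  show "\<forall>s\<in>{0..1}. g s > 0 \<longleftrightarrow> \<not> h s > 0"
  proof
    fix s :: real assume s: "s \<in> {0..1}"
    have Fs: "F (cx s xa xb) y1 = g s + \<alpha>" "F (cx s xa xb) y2 = h s + \<alpha>"
      using affX xa(1) xb(1) y s by (auto simp: g_def h_def)
    \<comment> \<open>the mixture of y1 and y2 with weight t is affine in s, and exceeds \<alpha> at both ends\<close>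
    have "(1-t)*(g s + \<alpha>) + t*(h s + \<alpha>)
        = (1-s)*((1-t)*F xa y1 + t*F xa y2) + s*((1-t)*F xb y1 + t*F xb y2)"
      by (simp add: g_def h_def algebra_simps)
    then have "\<alpha> < (1-t)*(g s + \<alpha>) + t*(h s + \<alpha>)"
      using convex_comb_gt[OF xa(3) xb(3) s] by simp
    then have "g s > 0 \<or> h s > 0"
      using convex_comb_le[of "g s + \<alpha>" \<alpha> "h s + \<alpha>" t] t by force
    moreover have "\<not> (g s > 0 \<and> h s > 0)"
      using sep cvX xa(1) xb(1) s Fs by force
    ultimately show "g s > 0 \<longleftrightarrow> \<not> h s > 0" by blast
  qed
qed

text \<open>If every mixture of y1 and y2 is beaten by some x, then a single x beats both: otherwise
  the mixing weights beaten by a y1-beater and those beaten by a y2-beater would split [0, 1]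
  into two disjoint nonempty open sets.\<close>

lemma affine_minimax_two:
  fixes F :: "'x \<Rightarrow> 'y \<Rightarrow> real"
  assumes cvX: "\<forall>x1\<in>X. \<forall>x2\<in>X. \<forall>s\<in>{0..1}. cx s x1 x2 \<in> X"
    and affX: "\<forall>x1\<in>X. \<forall>x2\<in>X. \<forall>s\<in>{0..1}. \<forall>y\<in>Y. F (cx s x1 x2) y = (1-s)*F x1 y + s*F x2 y"
    and affY: "\<forall>y1\<in>Y. \<forall>y2\<in>Y. \<forall>t\<in>{0..1}. \<forall>x\<in>X. F x (cy t y1 y2) = (1-t)*F x y1 + t*F x y2"
    and y: "y1 \<in> Y" "y2 \<in> Y"
    and hyp: "\<forall>t\<in>{0..1}. \<exists>x\<in>X. \<alpha> < F x (cy t y1 y2)"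
  shows "\<exists>x\<in>X. \<alpha> < F x y1 \<and> \<alpha> < F x y2"
proof (rule ccontr)
  assume "\<not> ?thesis"
  then have sep: "\<forall>x\<in>X. F x y1 \<le> \<alpha> \<or> F x y2 \<le> \<alpha>" by force
  define \<phi> where "\<phi> x t = (1-t)*F x y1 + t*F x y2" for x t
  define U where "U = (\<Union>x\<in>{x\<in>X. \<alpha> < F x y1}. {t. \<alpha> < \<phi> x t})"
  define V where "V = (\<Union>x\<in>{x\<in>X. \<alpha> < F x y2}. {t. \<alpha> < \<phi> x t})"
  have "open U" "open V"
    unfolding U_def V_def \<phi>_def by (auto intro!: open_UN open_Collect_less continuous_intros)
  moreover have "{0..1} \<subseteq> U \<union> V"
  proof
    fix t :: real assume t: "t \<in> {0..1}"
    obtain x where x: "x \<in> X" "\<alpha> < F x (cy t y1 y2)" using hyp t by blast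
    then have "\<alpha> < \<phi> x t" using affY y t by (simp add: \<phi>_def)
    then have "\<alpha> < F x y1 \<or> \<alpha> < F x y2"
      using convex_comb_le[OF _ _ t, of "F x y1" \<alpha> "F x y2"] unfolding \<phi>_def by linarith
    then show "t \<in> U \<union> V" using x(1) \<open>\<alpha> < \<phi> x t\<close> unfolding U_def V_def by blast
  qed
  moreover have "U \<inter> V \<inter> {0..1} = {}"
  proof (rule ccontr)
    assume "U \<inter> V \<inter> {0..1} \<noteq> {}"
    then obtain t xa xb where "t \<in> {0..1}"
      "xa \<in> X" "\<alpha> < F xa y1" "\<alpha> < \<phi> xa t" "xb \<in> X" "\<alpha> < F xb y2" "\<alpha> < \<phi> xb t"
      unfolding U_def V_def by blast
    then show False
      using affine_segment_crossing[OF cvX affX y sep] unfolding \<phi>_def by blast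
  qed
  ultimately have "U \<inter> {0..1} = {} \<or> V \<inter> {0..1} = {}"
    by (intro connectedD[OF connected_Icc]) auto
  moreover have "0 \<in> U"
  proof -
    obtain x where "x \<in> X" "\<alpha> < F x (cy 0 y1 y2)" using hyp by force
    then show ?thesis using affY y unfolding U_def \<phi>_def by force
  qed
  moreover have "1 \<in> V"
  proof -
    obtain x where "x \<in> X" "\<alpha> < F x (cy 1 y1 y2)" using hyp by force
    then show ?thesis using affY y unfolding V_def \<phi>_def by force
  qed
  ultimately show False by auto
qed

lemma affine_minimax_finite:
  fixes F :: "'x \<Rightarrow> 'y \<Rightarrow> real"
  assumes "finite G" "G \<subseteq> Y"
    and "\<forall>x1\<in>X. \<forall>x2\<in>X. \<forall>s\<in>{0..1}. cx s x1 x2 \<in> X"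
    and "\<forall>x1\<in>X. \<forall>x2\<in>X. \<forall>s\<in>{0..1}. \<forall>y\<in>Y. F (cx s x1 x2) y = (1-s)*F x1 y + s*F x2 y"
    and "\<forall>y1\<in>Y. \<forall>y2\<in>Y. \<forall>t\<in>{0..1}. cy t y1 y2 \<in> Y"
    and "\<forall>y1\<in>Y. \<forall>y2\<in>Y. \<forall>t\<in>{0..1}. \<forall>x\<in>X. F x (cy t y1 y2) = (1-t)*F x y1 + t*F x y2"
    and "X \<noteq> {}" and "\<forall>y\<in>Y. \<exists>x\<in>X. \<alpha> < F x y"
  shows "\<exists>x\<in>X. \<forall>y\<in>G. \<alpha> < F x y"
  using assms
proof (induction G arbitrary: X rule: finite_induct)
  case empty
  then show ?case by auto
next
  case (insert g G X)
  note cvX = insert.prems(2) and affX = insert.prems(3) and cvY = insert.prems(4)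
    and affY = insert.prems(5) and hyp = insert.prems(7)
  have g: "g \<in> Y" using insert.prems(1) by blast
  \<comment> \<open>restricting to the points beating \<alpha> at g keeps all hypotheses, by the two-point case\<close>
  define X' where "X' = {x\<in>X. \<alpha> < F x g}"
  have sub: "X' \<subseteq> X" unfolding X'_def by auto
  have cvX': "\<forall>x1\<in>X'. \<forall>x2\<in>X'. \<forall>s\<in>{0..1}. cx s x1 x2 \<in> X'"
  proof (intro ballI)
    fix x1 x2 and s :: real assume x: "x1 \<in> X'" "x2 \<in> X'" and s: "s \<in> {0..1}"
    then have "\<alpha> < (1-s)*F x1 g + s*F x2 g" unfolding X'_def by (auto intro: convex_comb_gt)
    then show "cx s x1 x2 \<in> X'" using cvX affX g x s sub unfolding X'_def by auto
  qed
  have hyp': "\<forall>y\<in>Y. \<exists>x\<in>X'. \<alpha> < F x y"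
  proof
    fix y assume y: "y \<in> Y"
    have "\<exists>x\<in>X. \<alpha> < F x y \<and> \<alpha> < F x g"
      using affine_minimax_two[OF cvX affX affY y g] cvY hyp y g by blast
    then show "\<exists>x\<in>X'. \<alpha> < F x y" unfolding X'_def by auto
  qed
  have "X' \<noteq> {}" using hyp' g by blast
  moreover have "\<forall>x1\<in>X'. \<forall>x2\<in>X'. \<forall>s\<in>{0..1}. \<forall>y\<in>Y. F (cx s x1 x2) y = (1-s)*F x1 y + s*F x2 y"
    "\<forall>y1\<in>Y. \<forall>y2\<in>Y. \<forall>t\<in>{0..1}. \<forall>x\<in>X'. F x (cy t y1 y2) = (1-t)*F x y1 + t*F x y2"
    using affX affY sub by blast+
  moreover have "G \<subseteq> Y" using insert.prems(1) by blast
  ultimately obtain x where "x \<in> X'" "\<forall>y\<in>G. \<alpha> < F x y"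
    using insert.IH[OF _ cvX' _ cvY _ _ hyp'] by blast
  then show ?case unfolding X'_def by auto
qed

lemma superlevel_set_eq_Int_closed:
  fixes f :: "'x::topological_space \<Rightarrow> real"
  assumes "continuous_on X f"
  shows "\<exists>K. closed K \<and> {x\<in>X. c \<le> f x} = X \<inter> K"
proof -
  have "closedin (top_of_set X) (X \<inter> f -` {c..})"
    using assms by (intro continuous_closedin_preimage) auto
  moreover have "X \<inter> f -` {c..} = {x\<in>X. c \<le> f x}" by auto
  ultimately show ?thesis by (simp add: closedin_closed)
qed

lemma affine_minimax:
  fixes F :: "'x::topological_space \<Rightarrow> 'y \<Rightarrow> real"
  assumes cvX: "\<forall>x1\<in>X. \<forall>x2\<in>X. \<forall>s\<in>{0..1}. cx s x1 x2 \<in> X"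
    and affX: "\<forall>x1\<in>X. \<forall>x2\<in>X. \<forall>s\<in>{0..1}. \<forall>y\<in>Y. F (cx s x1 x2) y = (1-s)*F x1 y + s*F x2 y"
    and cvY: "\<forall>y1\<in>Y. \<forall>y2\<in>Y. \<forall>t\<in>{0..1}. cy t y1 y2 \<in> Y"
    and affY: "\<forall>y1\<in>Y. \<forall>y2\<in>Y. \<forall>t\<in>{0..1}. \<forall>x\<in>X. F x (cy t y1 y2) = (1-t)*F x y1 + t*F x y2"
    and "compact X" and ne: "X \<noteq> {}"
    and cont: "\<forall>y\<in>Y. continuous_on X (\<lambda>x. F x y)"
  shows "\<exists>x0\<in>X. \<forall>c. (\<forall>y\<in>Y. \<exists>x\<in>X. c < F x y) \<longrightarrow> (\<forall>y\<in>Y. c \<le> F x0 y)"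
proof -
  define C where "C = {c. \<forall>y\<in>Y. \<exists>x\<in>X. c < F x y}"
  have "\<exists>K. closed K \<and> {x\<in>X. c \<le> F x y} = X \<inter> K" if "y \<in> Y" for y c
    using cont that by (intro superlevel_set_eq_Int_closed) auto
  then obtain K where K: "\<And>y c. y \<in> Y \<Longrightarrow> closed (K y c) \<and> {x\<in>X. c \<le> F x y} = X \<inter> K y c"
    by metis
  have "X \<inter> (\<Inter>yc\<in>Y \<times> C. K (fst yc) (snd yc)) \<noteq> {}"
  proof (rule compact_imp_fip_image[OF \<open>compact X\<close>])
    show "closed (K (fst yc) (snd yc))" if "yc \<in> Y \<times> C" for yc using K that by auto
    fix G assume G: "finite G" "G \<subseteq> Y \<times> C"
    show "X \<inter> (\<Inter>yc\<in>G. K (fst yc) (snd yc)) \<noteq> {}"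
    proof (cases "G = {}")
      case False
      \<comment> \<open>finitely many levels: it suffices to beat the largest one\<close>
      define c where "c = Max (snd ` G)"
      have "c \<in> snd ` G" unfolding c_def using G False by (intro Max_in) auto
      then have "c \<in> C" using G by auto
      then have "\<forall>y\<in>Y. \<exists>x\<in>X. c < F x y" unfolding C_def by blast
      moreover have "fst ` G \<subseteq> Y" "finite (fst ` G)" using G by auto
      ultimately obtain x where x: "x \<in> X" "\<forall>y\<in>fst ` G. c < F x y"
        using affine_minimax_finite[OF _ _ cvX affX cvY affY ne] by blast
      have "x \<in> K (fst yc) (snd yc)" if "yc \<in> G" for yc
      proof -
        have "snd yc \<le> c" unfolding c_def using G that by auto
        moreover have "c < F x (fst yc)" using x that by blast
        ultimately show ?thesis using x(1) K[of "fst yc" "snd yc"] G that by fastforce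
      qed
      then show ?thesis using x(1) by auto
    qed (use ne in auto)
  qed
  then obtain x0 where "x0 \<in> X" "\<forall>yc\<in>Y \<times> C. x0 \<in> K (fst yc) (snd yc)" by auto
  then show ?thesis using K unfolding C_def by fastforce
qed

section \<open>Histories and reaching probabilities\<close>

text \<open>Exchanging the two history components turns statements about player 1 into statements
  about player 2.\<close>

definition swap_hist :: "('i \<Rightarrow> 'x list \<Rightarrow> 'y list \<Rightarrow> 'c \<Rightarrow> 'r) \<Rightarrow> 'i \<Rightarrow> 'y list \<Rightarrow> 'x list \<Rightarrow> 'c \<Rightarrow> 'r" where
  "swap_hist f i hy hx c = f i hx hy c"

lemma swap_hist_swap_hist [simp]: "swap_hist (swap_hist f) = f"
  unfolding swap_hist_def by (intro ext) simp

lemma stoch1_swap_hist: "stoch1 n (swap_hist \<tau>) \<longleftrightarrow> stoch2 n \<tau>"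
  unfolding stoch1_def stoch2_def swap_hist_def by auto

lemma stoch2_swap_hist: "stoch2 n (swap_hist \<sigma>) \<longleftrightarrow> stoch1 n \<sigma>"
  unfolding stoch1_def stoch2_def swap_hist_def by auto

lemma realization_plan1_swap_hist:
  fixes y :: "'l \<Rightarrow> 'a list \<Rightarrow> 'b list \<Rightarrow> 'b::finite \<Rightarrow> real"
  shows "realization_plan1 n q (swap_hist y) \<longleftrightarrow> realization_plan2 n q y"
proof
  assume A: "realization_plan1 n q (swap_hist y)"
  show "realization_plan2 n q y" unfolding realization_plan2_def
  proof (intro allI impI)
    fix l and ha :: "'a list" and hb :: "'b list" assume "length ha = length hb \<and> length ha < n"
    then have "length hb = length ha \<and> length hb < n" by simp
    then show "(\<forall>b. 0 \<le> y l ha hb b) \<and>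
        (\<Sum>b\<in>UNIV. y l ha hb b) = (if hb = [] then q l else y l (butlast ha) (butlast hb) (last hb))"
      using A unfolding realization_plan1_def swap_hist_def by blast
  qed
next
  assume A: "realization_plan2 n q y"
  show "realization_plan1 n q (swap_hist y)" unfolding realization_plan1_def swap_hist_def
  proof (intro allI impI)
    fix l and hb :: "'b list" and ha :: "'a list" assume "length hb = length ha \<and> length hb < n"
    then have "length ha = length hb \<and> length ha < n" by simp
    then show "(\<forall>b. 0 \<le> y l ha hb b) \<and>
        (\<Sum>b\<in>UNIV. y l ha hb b) = (if hb = [] then q l else y l (butlast ha) (butlast hb) (last hb))"
      using A unfolding realization_plan2_def by blast
  qed
qed

lemma strategy_of_plan1_swap_hist: "strategy_of_plan1 q (swap_hist y) = swap_hist (strategy_of_plan2 q y)"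
  unfolding strategy_of_plan1_def strategy_of_plan2_def swap_hist_def by (intro ext) simp

lemma mem_histories: "h \<in> histories m \<longleftrightarrow> length (fst h) = m \<and> length (snd h) = m"
  unfolding histories_def by (cases h) simp

lemma histories_0: "histories 0 = {([], [])}"
  unfolding histories_def by auto

lemma histories_swap: "(histories m :: ('b list \<times> 'a list) set) = prod.swap ` histories m"
  unfolding histories_def by auto

lemma histories_Suc:
  "histories (Suc m) = (\<lambda>(h, a, b). (fst h @ [a], snd h @ [b])) ` (histories m \<times> UNIV \<times> UNIV)"
proof (intro set_eqI iffI)
  fix h :: "'a list \<times> 'b list" assume "h \<in> histories (Suc m)"
  then obtain ha hb where h: "h = (ha, hb)" "length ha = Suc m" "length hb = Suc m"
    unfolding histories_def by auto
  then have "ha = butlast ha @ [last ha]" "hb = butlast hb @ [last hb]"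
    by (metis append_butlast_last_id list.size(3) nat.simps(3))+
  moreover have "(butlast ha, butlast hb) \<in> histories m" using h unfolding histories_def by auto
  ultimately show "h \<in> (\<lambda>(h, a, b). (fst h @ [a], snd h @ [b])) ` (histories m \<times> UNIV \<times> UNIV)"
    using h by (auto intro!: image_eqI[where x="((butlast ha, butlast hb), last ha, last hb)"])
qed (auto simp: histories_def)

lemma sum_histories_Suc:
  fixes f :: "'a::finite list \<times> 'b::finite list \<Rightarrow> 'r::comm_monoid_add"
  shows "(\<Sum>h\<in>histories (Suc m). f h) = (\<Sum>h\<in>histories m. \<Sum>a\<in>UNIV. \<Sum>b\<in>UNIV. f (fst h @ [a], snd h @ [b]))"
proof -
  have "inj_on (\<lambda>(h, a, b). (fst h @ [a], snd h @ [b])) (histories m \<times> (UNIV::'a set) \<times> (UNIV::'b set))"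
    by (auto simp: inj_on_def)
  then have "(\<Sum>h\<in>histories (Suc m). f h)
      = (\<Sum>(h, ab)\<in>histories m \<times> (UNIV::'a set) \<times> (UNIV::'b set). f (fst h @ [fst ab], snd h @ [snd ab]))"
    unfolding histories_Suc by (subst sum.reindex) (simp_all add: case_prod_beta)
  then show ?thesis by (simp add: sum.cartesian_product case_prod_beta)
qed

lemma snoc_split:
  assumes "length ha = length hb" "ha \<noteq> []"
  obtains ha' hb' a b where "ha = ha' @ [a]" "hb = hb' @ [b]" "length ha' = length hb'"
proof -
  have "hb \<noteq> []" using assms by auto
  then show ?thesis using assms that[of "butlast ha" "last ha" "butlast hb" "last hb"]
    by (metis append_butlast_last_id length_butlast)
qed

lemma stoch1D:
  assumes "stoch1 n \<sigma>" "length ha = length hb" "length ha < n"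
  shows "0 \<le> \<sigma> k ha hb a" "(\<Sum>a\<in>UNIV. \<sigma> k ha hb a) = 1"
  using assms unfolding stoch1_def by auto

lemma stoch2D:
  assumes "stoch2 n \<tau>" "length ha = length hb" "length ha < n"
  shows "0 \<le> \<tau> l ha hb b" "(\<Sum>b\<in>UNIV. \<tau> l ha hb b) = 1"
  using assms unfolding stoch2_def by auto

definition own_reach :: "('i \<Rightarrow> 'x list \<Rightarrow> 'y list \<Rightarrow> 'x \<Rightarrow> real) \<Rightarrow> 'i \<Rightarrow> 'x list \<Rightarrow> 'y list \<Rightarrow> real" where
  "own_reach \<sigma> i hx hy = (\<Prod>r<length hx. \<sigma> i (take r hx) (take r hy) (hx ! r))"

lemma own_reach_Nil [simp]: "own_reach \<sigma> i [] hy = 1"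
  unfolding own_reach_def by simp

lemma own_reach_snoc:
  assumes "length hx = length hy"
  shows "own_reach \<sigma> i (hx @ [x]) (hy @ [y]) = own_reach \<sigma> i hx hy * \<sigma> i hx hy x"
proof -
  have "own_reach \<sigma> i (hx @ [x]) (hy @ [y])
      = (\<Prod>r<length hx. \<sigma> i (take r (hx @ [x])) (take r (hy @ [y])) ((hx @ [x]) ! r)) * \<sigma> i hx hy x"
    unfolding own_reach_def using assms by (simp add: nth_append)
  also have "(\<Prod>r<length hx. \<sigma> i (take r (hx @ [x])) (take r (hy @ [y])) ((hx @ [x]) ! r)) = own_reach \<sigma> i hx hy"
    unfolding own_reach_def using assms by (intro prod.cong) (auto simp: nth_append)
  finally show ?thesis .
qed

lemma reach_eq_own_reach:
  assumes "length ha = length hb"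
  shows "reach \<sigma> \<tau> k l ha hb = own_reach \<sigma> k ha hb * own_reach (swap_hist \<tau>) l hb ha"
  unfolding reach_def own_reach_def swap_hist_def using assms by (simp add: prod.distrib)

lemma reach_snoc:
  assumes "length ha = length hb"
  shows "reach \<sigma> \<tau> k l (ha @ [a]) (hb @ [b]) = reach \<sigma> \<tau> k l ha hb * (\<sigma> k ha hb a * \<tau> l ha hb b)"
  using assms by (simp add: reach_eq_own_reach own_reach_snoc swap_hist_def)

lemma reach_nonneg:
  assumes "stoch1 n \<sigma>" "stoch2 n \<tau>" "length ha = length hb" "length ha \<le> n"
  shows "0 \<le> reach \<sigma> \<tau> k l ha hb"
  unfolding reach_def using assms unfolding stoch1_def stoch2_def by (intro prod_nonneg) auto

lemma sum_reach:
  fixes \<sigma> :: "'k \<Rightarrow> 'a::finite list \<Rightarrow> 'b::finite list \<Rightarrow> 'a \<Rightarrow> real"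
  assumes "stoch1 n \<sigma>" "stoch2 n \<tau>" "m \<le> n"
  shows "(\<Sum>h\<in>histories m. reach \<sigma> \<tau> k l (fst h) (snd h)) = 1"
  using assms(3)
proof (induction m)
  case 0
  then show ?case by (simp add: histories_0 reach_def)
next
  case (Suc m)
  have "(\<Sum>h\<in>histories (Suc m). reach \<sigma> \<tau> k l (fst h) (snd h)) =
      (\<Sum>h\<in>histories m. reach \<sigma> \<tau> k l (fst h) (snd h) *
         ((\<Sum>a\<in>UNIV. \<sigma> k (fst h) (snd h) a) * (\<Sum>b\<in>UNIV. \<tau> l (fst h) (snd h) b)))"
    unfolding sum_histories_Suc
  proof (intro sum.cong refl)
    fix h :: "'a list \<times> 'b list" assume "h \<in> histories m"
    then have "length (fst h) = length (snd h)" by (simp add: mem_histories)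
    then have "(\<Sum>a\<in>UNIV. \<Sum>b\<in>UNIV. reach \<sigma> \<tau> k l (fst h @ [a]) (snd h @ [b]))
        = (\<Sum>a\<in>UNIV. \<Sum>b\<in>UNIV. reach \<sigma> \<tau> k l (fst h) (snd h) * (\<sigma> k (fst h) (snd h) a * \<tau> l (fst h) (snd h) b))"
      by (simp add: reach_snoc)
    also have "\<dots> = reach \<sigma> \<tau> k l (fst h) (snd h) * (\<Sum>a\<in>UNIV. \<Sum>b\<in>UNIV. \<sigma> k (fst h) (snd h) a * \<tau> l (fst h) (snd h) b)"
      by (simp add: sum_distrib_left)
    also have "\<dots> = reach \<sigma> \<tau> k l (fst h) (snd h) * ((\<Sum>a\<in>UNIV. \<sigma> k (fst h) (snd h) a) * (\<Sum>b\<in>UNIV. \<tau> l (fst h) (snd h) b))"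
      by (simp only: sum_product)
    finally show "(\<Sum>a\<in>UNIV. \<Sum>b\<in>UNIV. reach \<sigma> \<tau> k l (fst (fst h @ [a], snd h @ [b])) (snd (fst h @ [a], snd h @ [b])))
        = reach \<sigma> \<tau> k l (fst h) (snd h) * ((\<Sum>a\<in>UNIV. \<sigma> k (fst h) (snd h) a) * (\<Sum>b\<in>UNIV. \<tau> l (fst h) (snd h) b))"
      by simp
  qed
  also have "\<dots> = (\<Sum>h\<in>histories m. reach \<sigma> \<tau> k l (fst h) (snd h))"
    using assms(1,2) Suc.prems by (intro sum.cong refl) (simp add: mem_histories stoch1D stoch2D)
  finally show ?case using Suc by simp
qed

definition stage_payoff ::
  "('k \<Rightarrow> 'l \<Rightarrow> 'a::finite \<Rightarrow> 'b::finite \<Rightarrow> real) \<Rightarrow> ('k \<Rightarrow> 'a list \<Rightarrow> 'b list \<Rightarrow> 'a \<Rightarrow> real)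
   \<Rightarrow> ('l \<Rightarrow> 'a list \<Rightarrow> 'b list \<Rightarrow> 'b \<Rightarrow> real) \<Rightarrow> 'k \<Rightarrow> 'l \<Rightarrow> 'a list \<Rightarrow> 'b list \<Rightarrow> real" where
  "stage_payoff M \<sigma> \<tau> k l ha hb = (\<Sum>a\<in>UNIV. \<Sum>b\<in>UNIV. \<sigma> k ha hb a * \<tau> l ha hb b * M k l a b)"

lemma cond_payoff_eq_sum_stage_payoff:
  fixes \<sigma> :: "'k \<Rightarrow> 'a::finite list \<Rightarrow> 'b::finite list \<Rightarrow> 'a \<Rightarrow> real"
  assumes "stoch1 n \<sigma>" "stoch2 n \<tau>" "m \<le> n"
  shows "cond_payoff M m \<sigma> \<tau> k l =
    (\<Sum>m'<m. \<Sum>h\<in>histories m'. reach \<sigma> \<tau> k l (fst h) (snd h) * stage_payoff M \<sigma> \<tau> k l (fst h) (snd h))"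
  using assms(3)
proof (induction m)
  case 0
  then show ?case unfolding cond_payoff_def by simp
next
  case (Suc m)
  let ?R = "\<lambda>h. reach \<sigma> \<tau> k l (fst h) (snd h)"
  let ?P = "\<lambda>h. \<Sum>r<m. M k l (fst h ! r) (snd h ! r)"
  let ?s = "\<lambda>h a b. \<sigma> k (fst h) (snd h) a * \<tau> l (fst h) (snd h) b"
  have one: "(\<Sum>a\<in>UNIV. \<Sum>b\<in>UNIV. ?s h a b) = 1" if "h \<in> histories m" for h
    using assms(1,2) Suc.prems that
    by (simp add: sum_product[symmetric] mem_histories stoch1D stoch2D)
  \<comment> \<open>the payoff accumulated before the last stage is averaged out by the last move\<close>
  have "cond_payoff M (Suc m) \<sigma> \<tau> k l =
      (\<Sum>h\<in>histories m. \<Sum>a\<in>UNIV. \<Sum>b\<in>UNIV. ?R h * ?s h a b * (?P h + M k l a b))"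
    unfolding cond_payoff_def sum_histories_Suc
    by (intro sum.cong refl) (simp add: mem_histories reach_snoc nth_append)
  also have "\<dots> = (\<Sum>h\<in>histories m. ?R h * ?P h * (\<Sum>a\<in>UNIV. \<Sum>b\<in>UNIV. ?s h a b) +
      ?R h * stage_payoff M \<sigma> \<tau> k l (fst h) (snd h))"
  proof (intro sum.cong refl)
    have "(\<Sum>a\<in>UNIV. \<Sum>b\<in>UNIV. R * (f a * g b) * (P + c a b)) =
        R * P * (\<Sum>a\<in>UNIV. \<Sum>b\<in>UNIV. f a * g b) + R * (\<Sum>a\<in>UNIV. \<Sum>b\<in>UNIV. f a * g b * c a b)"
      for R P :: real and f :: "'a \<Rightarrow> real" and g :: "'b \<Rightarrow> real" and c
      by (simp add: sum_distrib_left sum.distrib ring_distribs mult_ac)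
    then show "(\<Sum>a\<in>UNIV. \<Sum>b\<in>UNIV. ?R h * ?s h a b * (?P h + M k l a b)) =
        ?R h * ?P h * (\<Sum>a\<in>UNIV. \<Sum>b\<in>UNIV. ?s h a b) + ?R h * stage_payoff M \<sigma> \<tau> k l (fst h) (snd h)" for h
      unfolding stage_payoff_def .
  qed
  also have "\<dots> = (\<Sum>h\<in>histories m. ?R h * ?P h * (\<Sum>a\<in>UNIV. \<Sum>b\<in>UNIV. ?s h a b)) +
      (\<Sum>h\<in>histories m. ?R h * stage_payoff M \<sigma> \<tau> k l (fst h) (snd h))"
    by (rule sum.distrib)
  also have "\<dots> = cond_payoff M m \<sigma> \<tau> k l +
      (\<Sum>h\<in>histories m. ?R h * stage_payoff M \<sigma> \<tau> k l (fst h) (snd h))"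
    unfolding cond_payoff_def by (simp add: one)
  finally show ?case using Suc by simp
qed

definition max_abs_entry :: "('k::finite \<Rightarrow> 'l::finite \<Rightarrow> 'a::finite \<Rightarrow> 'b::finite \<Rightarrow> real) \<Rightarrow> real" where
  "max_abs_entry M = Max (range (\<lambda>(k, l, a, b). \<bar>M k l a b\<bar>))"

lemma abs_le_max_abs_entry: "\<bar>M k l a b\<bar> \<le> max_abs_entry M"
  unfolding max_abs_entry_def by (rule Max_ge) (auto intro: image_eqI[where x="(k, l, a, b)"])

lemma simplex_le_1: "simplex p \<Longrightarrow> p i \<le> (1::real)"
  unfolding simplex_def by (metis member_le_sum finite UNIV_I)

lemma cond_payoff_bound:
  fixes \<sigma> :: "'k::finite \<Rightarrow> 'a::finite list \<Rightarrow> 'b::finite list \<Rightarrow> 'a \<Rightarrow> real"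
  assumes "stoch1 n \<sigma>" "stoch2 n \<tau>"
  shows "\<bar>cond_payoff M n \<sigma> \<tau> k (l::'l::finite)\<bar> \<le> real n * max_abs_entry M"
proof -
  have "\<bar>cond_payoff M n \<sigma> \<tau> k l\<bar> \<le> (\<Sum>h\<in>histories n. \<bar>reach \<sigma> \<tau> k l (fst h) (snd h) *
         (\<Sum>r<n. M k l (fst h ! r) (snd h ! r))\<bar>)"
    unfolding cond_payoff_def by (rule sum_abs)
  also have "\<dots> \<le> (\<Sum>h\<in>histories n. reach \<sigma> \<tau> k l (fst h) (snd h) * (real n * max_abs_entry M))"
  proof (intro sum_mono)
    fix h :: "'a list \<times> 'b list" assume "h \<in> histories n"
    then have "0 \<le> reach \<sigma> \<tau> k l (fst h) (snd h)"
      using assms by (intro reach_nonneg) (auto simp: mem_histories)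
    moreover have "\<bar>\<Sum>r<n. M k l (fst h ! r) (snd h ! r)\<bar> \<le> real n * max_abs_entry M"
    proof -
      have "\<bar>\<Sum>r<n. M k l (fst h ! r) (snd h ! r)\<bar> \<le> (\<Sum>r<n. \<bar>M k l (fst h ! r) (snd h ! r)\<bar>)"
        by (rule sum_abs)
      also have "\<dots> \<le> real n * max_abs_entry M"
        using sum_mono[of "{..<n}" "\<lambda>r. \<bar>M k l (fst h ! r) (snd h ! r)\<bar>" "\<lambda>_. max_abs_entry M"]
        by (simp add: abs_le_max_abs_entry)
      finally show ?thesis .
    qed
    ultimately show "\<bar>reach \<sigma> \<tau> k l (fst h) (snd h) * (\<Sum>r<n. M k l (fst h ! r) (snd h ! r))\<bar>
        \<le> reach \<sigma> \<tau> k l (fst h) (snd h) * (real n * max_abs_entry M)"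
      by (simp add: abs_mult mult_left_mono)
  qed
  also have "\<dots> = real n * max_abs_entry M"
    using sum_reach[OF assms order_refl, of k l] by (simp add: sum_distrib_right[symmetric])
  finally show ?thesis .
qed

lemma dual2_payoff_bound:
  assumes "simplex p" "simplex q" "stoch1 n \<sigma>" "stoch2 n \<tau>"
  shows "\<bar>dual2_payoff M n p \<nu> \<sigma> q \<tau>\<bar> \<le> (\<Sum>l\<in>UNIV. \<bar>\<nu> l\<bar>) + real n * max_abs_entry M"
proof -
  let ?B = "real n * max_abs_entry M"
  have inner: "\<bar>\<nu> l + (\<Sum>k\<in>UNIV. p k * cond_payoff M n \<sigma> \<tau> k l)\<bar> \<le> \<bar>\<nu> l\<bar> + ?B" for l
  proof -
    have "\<bar>\<Sum>k\<in>UNIV. p k * cond_payoff M n \<sigma> \<tau> k l\<bar> \<le> (\<Sum>k\<in>UNIV. p k * ?B)"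
      using assms cond_payoff_bound[OF assms(3,4)] unfolding simplex_def
      by (intro order_trans[OF sum_abs] sum_mono) (simp add: abs_mult mult_left_mono)
    also have "(\<Sum>k\<in>UNIV. p k * ?B) = ?B"
      using assms(1) unfolding simplex_def by (simp add: sum_distrib_right[symmetric])
    finally show ?thesis
      using abs_triangle_ineq[of "\<nu> l" "\<Sum>k\<in>UNIV. p k * cond_payoff M n \<sigma> \<tau> k l"] by linarith
  qed
  have "\<bar>dual2_payoff M n p \<nu> \<sigma> q \<tau>\<bar> \<le> (\<Sum>l\<in>UNIV. q l * (\<bar>\<nu> l\<bar> + ?B))"
    unfolding dual2_payoff_def using assms(2) inner unfolding simplex_def
    by (intro order_trans[OF sum_abs] sum_mono) (simp add: abs_mult mult_left_mono)
  also have "\<dots> = (\<Sum>l\<in>UNIV. q l * \<bar>\<nu> l\<bar>) + ?B"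
    using assms(2) unfolding simplex_def by (simp add: ring_distribs sum.distrib sum_distrib_right[symmetric])
  also have "(\<Sum>l\<in>UNIV. q l * \<bar>\<nu> l\<bar>) \<le> (\<Sum>l\<in>UNIV. \<bar>\<nu> l\<bar>)"
    using assms(2) simplex_le_1[OF assms(2)] unfolding simplex_def
    by (intro sum_mono) (simp add: mult_left_le_one_le)
  finally show ?thesis by simp
qed

section \<open>Realization plans and behaviour strategies\<close>

definition plan_of_strategy1 ::
  "nat \<Rightarrow> ('k \<Rightarrow> real) \<Rightarrow> ('k \<Rightarrow> 'a list \<Rightarrow> 'b list \<Rightarrow> 'a \<Rightarrow> real) \<Rightarrow> 'k \<Rightarrow> 'a list \<Rightarrow> 'b list \<Rightarrow> 'a \<Rightarrow> real" where
  "plan_of_strategy1 n p \<sigma> k ha hb a =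
     (if length ha = length hb \<and> length ha < n then p k * own_reach \<sigma> k ha hb * \<sigma> k ha hb a else 0)"

definition plan_of_strategy2 ::
  "nat \<Rightarrow> ('l \<Rightarrow> real) \<Rightarrow> ('l \<Rightarrow> 'a list \<Rightarrow> 'b list \<Rightarrow> 'b \<Rightarrow> real) \<Rightarrow> 'l \<Rightarrow> 'a list \<Rightarrow> 'b list \<Rightarrow> 'b \<Rightarrow> real" where
  "plan_of_strategy2 n q \<tau> = swap_hist (plan_of_strategy1 n q (swap_hist \<tau>))"

lemma plan_of_strategy2_eq:
  "plan_of_strategy2 n q \<tau> l ha hb b =
     (if length ha = length hb \<and> length ha < n then q l * own_reach (swap_hist \<tau>) l hb ha * \<tau> l ha hb b else 0)"
  unfolding plan_of_strategy2_def plan_of_strategy1_def by (auto simp: swap_hist_def)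

definition parent_weight :: "('k \<Rightarrow> real) \<Rightarrow> ('k \<Rightarrow> 'a list \<Rightarrow> 'b list \<Rightarrow> 'a \<Rightarrow> real) \<Rightarrow> 'k \<Rightarrow> 'a list \<Rightarrow> 'b list \<Rightarrow> real" where
  "parent_weight p x k ha hb = (if ha = [] then p k else x k (butlast ha) (butlast hb) (last ha))"

lemma parent_weight_snoc [simp]: "parent_weight p x k (ha @ [a]) (hb @ [b]) = x k ha hb a"
  unfolding parent_weight_def by simp

lemma realization_plan1D:
  assumes "realization_plan1 n p x" "length ha = length hb" "length ha < n"
  shows "0 \<le> x k ha hb a" "(\<Sum>a\<in>UNIV. x k ha hb a) = parent_weight p x k ha hb"
  using assms unfolding realization_plan1_def parent_weight_def by auto

lemma strategy_of_plan1_eq: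
  fixes x :: "'k \<Rightarrow> 'a list \<Rightarrow> 'b list \<Rightarrow> 'a::finite \<Rightarrow> real"
  shows "strategy_of_plan1 p x k ha hb a = (if 0 < parent_weight p x k ha hb
     then x k ha hb a / parent_weight p x k ha hb else 1 / real (card (UNIV :: 'a set)))"
  unfolding strategy_of_plan1_def parent_weight_def Let_def by simp

lemma realization_plan1_plan_of_strategy1:
  assumes p: "\<forall>k. 0 \<le> p k" and \<sigma>: "stoch1 n \<sigma>"
  shows "realization_plan1 n p (plan_of_strategy1 n p (\<sigma> :: 'k \<Rightarrow> 'a::finite list \<Rightarrow> 'b list \<Rightarrow> 'a \<Rightarrow> real))"
  unfolding realization_plan1_def
proof (intro allI impI conjI)
  fix k and ha :: "'a list" and hb :: "'b list" and a
  assume "length ha = length hb \<and> length ha < n"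
  then have len: "length ha = length hb" "length ha < n" by auto
  have "0 \<le> own_reach \<sigma> k ha hb"
    unfolding own_reach_def
  proof (intro prod_nonneg ballI)
    fix r assume "r \<in> {..<length ha}"
    then show "0 \<le> \<sigma> k (take r ha) (take r hb) (ha ! r)"
      using len by (intro stoch1D(1)[OF \<sigma>]) auto
  qed
  then show "0 \<le> plan_of_strategy1 n p \<sigma> k ha hb a"
    using len p stoch1D(1)[OF \<sigma> len] unfolding plan_of_strategy1_def by simp
  have sum: "(\<Sum>a\<in>UNIV. plan_of_strategy1 n p \<sigma> k ha hb a) = p k * own_reach \<sigma> k ha hb"
    using len stoch1D(2)[OF \<sigma> len] unfolding plan_of_strategy1_def
    by (simp add: sum_distrib_left[symmetric])
  show "(\<Sum>a\<in>UNIV. plan_of_strategy1 n p \<sigma> k ha hb a) =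
      (if ha = [] then p k else plan_of_strategy1 n p \<sigma> k (butlast ha) (butlast hb) (last ha))"
  proof (cases "ha = []")
    case False
    obtain ha' hb' a' b' where "ha = ha' @ [a']" "hb = hb' @ [b']" "length ha' = length hb'"
      by (rule snoc_split[OF len(1) False])
    then show ?thesis using sum len by (simp add: plan_of_strategy1_def own_reach_snoc)
  qed (use sum in simp)
qed

lemma parent_weight_mult_strategy_of_plan1:
  assumes x: "realization_plan1 n p x" and len: "length ha = length hb" "length ha < n"
  shows "parent_weight p x k ha hb * strategy_of_plan1 p x k ha hb a = x k ha hb (a::'a::finite)"
proof (cases "0 < parent_weight p x k ha hb")
  case False
  \<comment> \<open>a zero parent weight forces the whole nonnegative row of the plan to vanish\<close>
  have "0 \<le> (\<Sum>a\<in>UNIV. x k ha hb a)" using realization_plan1D(1)[OF x len] by (simp add: sum_nonneg)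
  then have "(\<Sum>a\<in>UNIV. x k ha hb a) = 0" "parent_weight p x k ha hb = 0"
    using False realization_plan1D(2)[OF x len, of k] by linarith+
  then have "x k ha hb a = 0"
    using realization_plan1D(1)[OF x len] sum_nonneg_eq_0_iff[of UNIV "x k ha hb"] by simp
  then show ?thesis using \<open>parent_weight p x k ha hb = 0\<close> by simp
qed (simp add: strategy_of_plan1_eq)

lemma stoch1_strategy_of_plan1:
  assumes x: "realization_plan1 n p x"
  shows "stoch1 n (strategy_of_plan1 p (x :: 'k \<Rightarrow> 'a list \<Rightarrow> 'b list \<Rightarrow> 'a::finite \<Rightarrow> real))"
  unfolding stoch1_def
proof (intro allI impI conjI)
  fix k and ha :: "'a list" and hb :: "'b list" and a
  assume "length ha = length hb \<and> length ha < n"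
  then have len: "length ha = length hb" "length ha < n" by auto
  show "0 \<le> strategy_of_plan1 p x k ha hb a"
    using realization_plan1D(1)[OF x len] by (simp add: strategy_of_plan1_eq)
  show "(\<Sum>a\<in>UNIV. strategy_of_plan1 p x k ha hb a) = 1"
  proof (cases "0 < parent_weight p x k ha hb")
    case True
    then show ?thesis using realization_plan1D(2)[OF x len, of k]
      by (simp add: strategy_of_plan1_eq sum_divide_distrib[symmetric])
  qed (simp add: strategy_of_plan1_eq)
qed

lemma own_reach_strategy_of_plan1:
  assumes x: "realization_plan1 n p x" and len: "length ha = length hb" "length ha < n"
  shows "p k * own_reach (strategy_of_plan1 p x) k ha hb = parent_weight p x k ha (hb :: 'b list)"
  using len
proof (induction "length ha" arbitrary: ha hb)
  case 0
  then show ?case by (simp add: parent_weight_def)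
next
  case (Suc m)
  then have "ha \<noteq> []" by auto
  then obtain ha' hb' a' b' where e: "ha = ha' @ [a']" "hb = hb' @ [b']" "length ha' = length hb'"
    by (rule snoc_split[OF Suc.prems(1)])
  have len': "length ha' = length hb'" "length ha' < n" "m = length ha'" using e Suc.prems Suc.hyps by auto
  have "p k * own_reach (strategy_of_plan1 p x) k ha hb =
      p k * own_reach (strategy_of_plan1 p x) k ha' hb' * strategy_of_plan1 p x k ha' hb' a'"
    using e by (simp add: own_reach_snoc)
  also have "\<dots> = x k ha' hb' a'"
    using Suc.hyps(1)[OF len'(3) len'(1,2)] parent_weight_mult_strategy_of_plan1[OF x len'(1,2)] by simp
  finally show ?case using e by simp
qed

lemma plan_of_strategy_of_plan1:
  assumes "realization_plan1 n p x" "length ha = length hb" "length ha < n"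
  shows "plan_of_strategy1 n p (strategy_of_plan1 p x) k ha hb a = x k ha hb (a::'a::finite)"
  using own_reach_strategy_of_plan1[OF assms, of k] parent_weight_mult_strategy_of_plan1[OF assms]
    assms(2,3) unfolding plan_of_strategy1_def by simp

lemma realization_plan2_plan_of_strategy2:
  assumes "\<forall>l. 0 \<le> q l" "stoch2 n \<tau>"
  shows "realization_plan2 n q (plan_of_strategy2 n q (\<tau> :: 'l \<Rightarrow> 'a list \<Rightarrow> 'b::finite list \<Rightarrow> 'b \<Rightarrow> real))"
  using realization_plan1_plan_of_strategy1[OF assms(1), of n "swap_hist \<tau>"] assms(2)
  unfolding plan_of_strategy2_def realization_plan1_swap_hist[symmetric] stoch1_swap_hist by simp

lemma stoch2_strategy_of_plan2:
  assumes "realization_plan2 n q y"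
  shows "stoch2 n (strategy_of_plan2 q (y :: 'l \<Rightarrow> 'a list \<Rightarrow> 'b list \<Rightarrow> 'b::finite \<Rightarrow> real))"
  using stoch1_strategy_of_plan1[of n q "swap_hist y"] assms
  unfolding realization_plan1_swap_hist strategy_of_plan1_swap_hist stoch1_swap_hist by simp

section \<open>The payoff as a biaffine function of realization plans\<close>

definition weighted_entry ::
  "('k::finite \<Rightarrow> 'l \<Rightarrow> 'a \<Rightarrow> 'b \<Rightarrow> real) \<Rightarrow> ('k \<Rightarrow> 'a list \<Rightarrow> 'b list \<Rightarrow> 'a \<Rightarrow> real)
   \<Rightarrow> 'l \<Rightarrow> 'a list \<Rightarrow> 'b list \<Rightarrow> 'a \<Rightarrow> 'b \<Rightarrow> real" where
  "weighted_entry M x l ha hb a b = (\<Sum>k\<in>UNIV. M k l a b * x k ha hb a)"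

definition cond_plan_payoff ::
  "('k::finite \<Rightarrow> 'l \<Rightarrow> 'a::finite \<Rightarrow> 'b::finite \<Rightarrow> real) \<Rightarrow> nat
   \<Rightarrow> ('k \<Rightarrow> 'a list \<Rightarrow> 'b list \<Rightarrow> 'a \<Rightarrow> real) \<Rightarrow> ('l \<Rightarrow> 'a list \<Rightarrow> 'b list \<Rightarrow> 'b \<Rightarrow> real) \<Rightarrow> 'l \<Rightarrow> real" where
  "cond_plan_payoff M n x y l = (\<Sum>m<n. \<Sum>h\<in>histories m. \<Sum>a\<in>UNIV. \<Sum>b\<in>UNIV.
     weighted_entry M x l (fst h) (snd h) a b * y l (fst h) (snd h) b)"

definition dual2_plan_payoff ::
  "('k::finite \<Rightarrow> 'l::finite \<Rightarrow> 'a::finite \<Rightarrow> 'b::finite \<Rightarrow> real) \<Rightarrow> nat \<Rightarrow> ('l \<Rightarrow> real)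
   \<Rightarrow> ('k \<Rightarrow> 'a list \<Rightarrow> 'b list \<Rightarrow> 'a \<Rightarrow> real) \<Rightarrow> ('l \<Rightarrow> 'a list \<Rightarrow> 'b list \<Rightarrow> 'b \<Rightarrow> real) \<Rightarrow> real" where
  "dual2_plan_payoff M n \<nu> x y = (\<Sum>l\<in>UNIV. \<nu> l * (\<Sum>b\<in>UNIV. y l [] [] b) + cond_plan_payoff M n x y l)"

lemma cond_plan_payoff_plan_of_strategy:
  fixes M :: "'k::finite \<Rightarrow> 'l::finite \<Rightarrow> 'a::finite \<Rightarrow> 'b::finite \<Rightarrow> real"
  assumes \<sigma>: "stoch1 n \<sigma>" and \<tau>: "stoch2 n \<tau>"
  shows "cond_plan_payoff M n (plan_of_strategy1 n p \<sigma>) (plan_of_strategy2 n q \<tau>) l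
    = q l * (\<Sum>k\<in>UNIV. p k * cond_payoff M n \<sigma> \<tau> k l)"
proof -
  let ?R = "\<lambda>k h. reach \<sigma> \<tau> k l (fst h) (snd h)"
  let ?S = "\<lambda>k h. stage_payoff M \<sigma> \<tau> k l (fst h) (snd h)"
  have "(\<Sum>a\<in>UNIV. \<Sum>b\<in>UNIV. weighted_entry M (plan_of_strategy1 n p \<sigma>) l (fst h) (snd h) a b
        * plan_of_strategy2 n q \<tau> l (fst h) (snd h) b)
      = (\<Sum>k\<in>UNIV. q l * p k * (?R k h * ?S k h))" if "h \<in> histories m" "m < n" for m h
  proof -
    have len: "length (fst h) = length (snd h)" "length (fst h) < n"
      using that by (auto simp: mem_histories)
    have "(\<Sum>a\<in>UNIV. \<Sum>b\<in>UNIV. weighted_entry M (plan_of_strategy1 n p \<sigma>) l (fst h) (snd h) a b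
          * plan_of_strategy2 n q \<tau> l (fst h) (snd h) b)
        = (\<Sum>a\<in>UNIV. \<Sum>b\<in>UNIV. \<Sum>k\<in>UNIV. q l * p k * (?R k h *
            (\<sigma> k (fst h) (snd h) a * \<tau> l (fst h) (snd h) b * M k l a b)))"
      unfolding weighted_entry_def plan_of_strategy1_def plan_of_strategy2_eq sum_distrib_right
      using len by (intro sum.cong refl) (simp add: reach_eq_own_reach mult_ac)
    also have "\<dots> = (\<Sum>k\<in>UNIV. \<Sum>a\<in>UNIV. \<Sum>b\<in>UNIV. q l * p k * (?R k h *
            (\<sigma> k (fst h) (snd h) a * \<tau> l (fst h) (snd h) b * M k l a b)))"
      by (subst sum.swap) (rule sum.cong[OF refl], rule sum.swap)
    also have "\<dots> = (\<Sum>k\<in>UNIV. q l * p k * (?R k h * ?S k h))"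
      unfolding stage_payoff_def by (simp add: sum_distrib_left)
    finally show ?thesis .
  qed
  then have "cond_plan_payoff M n (plan_of_strategy1 n p \<sigma>) (plan_of_strategy2 n q \<tau>) l
      = (\<Sum>m<n. \<Sum>h\<in>histories m. \<Sum>k\<in>UNIV. q l * p k * (?R k h * ?S k h))"
    unfolding cond_plan_payoff_def by (intro sum.cong refl) auto
  also have "\<dots> = (\<Sum>k\<in>UNIV. \<Sum>m<n. \<Sum>h\<in>histories m. q l * p k * (?R k h * ?S k h))"
    by (subst sum.swap) (rule sum.cong[OF refl], rule sum.swap)
  also have "\<dots> = (\<Sum>k\<in>UNIV. q l * p k * (\<Sum>m<n. \<Sum>h\<in>histories m. ?R k h * ?S k h))"
    by (simp only: sum_distrib_left)
  also have "\<dots> = q l * (\<Sum>k\<in>UNIV. p k * cond_payoff M n \<sigma> \<tau> k l)"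
    by (simp add: cond_payoff_eq_sum_stage_payoff[OF \<sigma> \<tau> order_refl] sum_distrib_left mult.assoc)
  finally show ?thesis .
qed

lemma dual2_payoff_eq_plan_payoff:
  fixes M :: "'k::finite \<Rightarrow> 'l::finite \<Rightarrow> 'a::finite \<Rightarrow> 'b::finite \<Rightarrow> real"
  assumes "1 \<le> n" "stoch1 n \<sigma>" "stoch2 n \<tau>"
  shows "dual2_payoff M n p \<nu> \<sigma> q \<tau> = dual2_plan_payoff M n \<nu> (plan_of_strategy1 n p \<sigma>) (plan_of_strategy2 n q \<tau>)"
proof -
  have "(\<Sum>b\<in>UNIV. plan_of_strategy2 n q \<tau> l [] [] b) = q l" for l
    using assms stoch2D(2)[OF assms(3), of "[]" "[]" l]
    by (simp add: plan_of_strategy2_eq sum_distrib_left[symmetric])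
  then show ?thesis
    unfolding dual2_plan_payoff_def dual2_payoff_def cond_plan_payoff_plan_of_strategy[OF assms(2,3)]
    by (simp add: distrib_left mult.commute)
qed

definition mix_plan :: "real \<Rightarrow> ('i \<Rightarrow> 'x \<Rightarrow> 'y \<Rightarrow> 'c \<Rightarrow> real) \<Rightarrow> ('i \<Rightarrow> 'x \<Rightarrow> 'y \<Rightarrow> 'c \<Rightarrow> real)
    \<Rightarrow> 'i \<Rightarrow> 'x \<Rightarrow> 'y \<Rightarrow> 'c \<Rightarrow> real" where
  "mix_plan t f g = (\<lambda>i hx hy c. (1 - t) * f i hx hy c + t * g i hx hy c)"

lemma swap_hist_mix_plan: "swap_hist (mix_plan t f g) = mix_plan t (swap_hist f) (swap_hist g)"
  unfolding swap_hist_def mix_plan_def ..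

text \<open>Plans are normalised to vanish off the histories of stages 1..n, so that the set is compact
  and every plan is recovered exactly from its induced strategy. In the type 2 dual game player 2
  chooses his own type, hence his type distribution is part of his plan.\<close>

definition plan_set1 :: "nat \<Rightarrow> ('k \<Rightarrow> real) \<Rightarrow> ('k \<Rightarrow> 'a list \<Rightarrow> 'b list \<Rightarrow> 'a::finite \<Rightarrow> real) set" where
  "plan_set1 n p = {x. realization_plan1 n p x \<and>
     (\<forall>k ha hb a. \<not> (length ha = length hb \<and> length ha < n) \<longrightarrow> x k ha hb a = 0)}"

definition plan_set2 :: "nat \<Rightarrow> ('l::finite \<Rightarrow> 'a list \<Rightarrow> 'b list \<Rightarrow> 'b::finite \<Rightarrow> real) set" where
  "plan_set2 n = {y. \<exists>q. simplex q \<and> swap_hist y \<in> plan_set1 n q}"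

lemma plan_of_strategy1_mem_plan_set1:
  assumes "\<forall>k. 0 \<le> p k" "stoch1 n \<sigma>"
  shows "plan_of_strategy1 n p \<sigma> \<in> plan_set1 n p"
  unfolding plan_set1_def using realization_plan1_plan_of_strategy1[OF assms]
  by (auto simp: plan_of_strategy1_def)

lemma plan_of_strategy2_mem_plan_set2:
  assumes "simplex q" "stoch2 n \<tau>"
  shows "plan_of_strategy2 n q \<tau> \<in> plan_set2 n"
proof -
  have "\<forall>l. 0 \<le> q l" using assms(1) unfolding simplex_def by auto
  then have "swap_hist (plan_of_strategy2 n q \<tau>) \<in> plan_set1 n q"
    using plan_of_strategy1_mem_plan_set1 assms(2)
    unfolding plan_of_strategy2_def swap_hist_swap_hist stoch1_swap_hist[symmetric] by blast
  then show ?thesis unfolding plan_set2_def using assms(1) by blast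
qed

lemma plan_of_strategy_of_plan1_inverse:
  assumes "x \<in> plan_set1 n p"
  shows "plan_of_strategy1 n p (strategy_of_plan1 p x) = x"
proof (intro ext)
  fix k ha hb a
  show "plan_of_strategy1 n p (strategy_of_plan1 p x) k ha hb a = x k ha hb a"
    using assms plan_of_strategy_of_plan1[of n p x ha hb k a]
    unfolding plan_set1_def by (cases "length ha = length hb \<and> length ha < n") (auto simp: plan_of_strategy1_def)
qed

lemma plan_set2_plan_of_strategy2:
  assumes "y \<in> plan_set2 n"
  obtains q \<tau> where "simplex q" "stoch2 n \<tau>" "y = plan_of_strategy2 n q \<tau>"
proof -
  obtain q where q: "simplex q" "swap_hist y \<in> plan_set1 n q"
    using assms unfolding plan_set2_def by blast
  have "realization_plan2 n q y"
    using q(2) by (simp add: plan_set1_def realization_plan1_swap_hist)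
  moreover have "y = plan_of_strategy2 n q (strategy_of_plan2 q y)"
    using plan_of_strategy_of_plan1_inverse[OF q(2)]
    unfolding plan_of_strategy2_def strategy_of_plan1_swap_hist
    by (metis swap_hist_swap_hist)
  ultimately show ?thesis using that q(1) stoch2_strategy_of_plan2 by blast
qed

lemma mix_plan_mem_plan_set1:
  fixes x1 x2 :: "'k \<Rightarrow> 'a list \<Rightarrow> 'b list \<Rightarrow> 'a::finite \<Rightarrow> real"
  assumes x1: "x1 \<in> plan_set1 n p1" and x2: "x2 \<in> plan_set1 n p2" and t: "t \<in> {0..1}"
  shows "mix_plan t x1 x2 \<in> plan_set1 n (\<lambda>k. (1 - t) * p1 k + t * p2 k)"
  unfolding plan_set1_def mem_Collect_eq
proof
  show "realization_plan1 n (\<lambda>k. (1 - t) * p1 k + t * p2 k) (mix_plan t x1 x2)"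
    unfolding realization_plan1_def
  proof (intro allI impI conjI)
    fix k and ha :: "'a list" and hb :: "'b list" and a
    assume "length ha = length hb \<and> length ha < n"
    then have len: "length ha = length hb" "length ha < n" by auto
    have r: "realization_plan1 n p1 x1" "realization_plan1 n p2 x2"
      using x1 x2 unfolding plan_set1_def by auto
    show "0 \<le> mix_plan t x1 x2 k ha hb a"
      using realization_plan1D(1)[OF r(1) len] realization_plan1D(1)[OF r(2) len] t
      unfolding mix_plan_def by simp
    show "(\<Sum>a\<in>UNIV. mix_plan t x1 x2 k ha hb a) = (if ha = [] then (1 - t) * p1 k + t * p2 k
        else mix_plan t x1 x2 k (butlast ha) (butlast hb) (last ha))"
      using realization_plan1D(2)[OF r(1) len, of k] realization_plan1D(2)[OF r(2) len, of k]
      unfolding mix_plan_def parent_weight_def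
      by (simp add: sum.distrib sum_distrib_left[symmetric])
  qed
  show "\<forall>k ha hb a. \<not> (length ha = length hb \<and> length ha < n) \<longrightarrow> mix_plan t x1 x2 k ha hb a = 0"
    using x1 x2 unfolding plan_set1_def mix_plan_def by auto
qed

lemma convex_plan_set1:
  assumes "x1 \<in> plan_set1 n p" "x2 \<in> plan_set1 n p" "t \<in> {0..1}"
  shows "mix_plan t x1 x2 \<in> plan_set1 n p"
  using mix_plan_mem_plan_set1[OF assms] by (simp add: algebra_simps)

lemma convex_plan_set2:
  assumes y1: "y1 \<in> plan_set2 n" and y2: "y2 \<in> plan_set2 n" and t: "t \<in> {0..1}"
  shows "mix_plan t y1 y2 \<in> plan_set2 n"
proof -
  obtain q1 q2 where q: "simplex q1" "swap_hist y1 \<in> plan_set1 n q1" "simplex q2" "swap_hist y2 \<in> plan_set1 n q2"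
    using y1 y2 unfolding plan_set2_def by blast
  have "simplex (\<lambda>l. (1 - t) * q1 l + t * q2 l)"
    using q(1,3) t unfolding simplex_def
    by (auto simp: sum.distrib sum_distrib_left[symmetric])
  moreover have "swap_hist (mix_plan t y1 y2) \<in> plan_set1 n (\<lambda>l. (1 - t) * q1 l + t * q2 l)"
    unfolding swap_hist_mix_plan using mix_plan_mem_plan_set1[OF q(2,4) t] .
  ultimately show ?thesis unfolding plan_set2_def by blast
qed

lemma compact_PiE_UNIV:
  fixes S :: "'i \<Rightarrow> 'b::topological_space set"
  assumes "\<And>i. compact (S i)"
  shows "compact (PiE UNIV S)"
proof -
  have "compactin (product_topology (\<lambda>i. euclidean) UNIV) (PiE UNIV S)"
    using assms unfolding compactin_PiE by auto
  then show ?thesis unfolding euclidean_product_topology compactin_euclidean_iff .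
qed

lemma continuous_on_eval_plan [continuous_intros]:
  "continuous_on S (\<lambda>x :: 'i \<Rightarrow> 'x \<Rightarrow> 'y \<Rightarrow> 'c \<Rightarrow> real. x i hx hy c)"
proof -
  have "continuous_on UNIV (\<lambda>x :: 'i \<Rightarrow> 'x \<Rightarrow> 'y \<Rightarrow> 'c \<Rightarrow> real. x i)" by simp
  then have "continuous_on UNIV (\<lambda>x :: 'i \<Rightarrow> 'x \<Rightarrow> 'y \<Rightarrow> 'c \<Rightarrow> real. x i hx)"
    by (rule continuous_on_product_then_coordinatewise)
  then have "continuous_on UNIV (\<lambda>x :: 'i \<Rightarrow> 'x \<Rightarrow> 'y \<Rightarrow> 'c \<Rightarrow> real. x i hx hy)"
    by (rule continuous_on_product_then_coordinatewise)
  then have "continuous_on UNIV (\<lambda>x :: 'i \<Rightarrow> 'x \<Rightarrow> 'y \<Rightarrow> 'c \<Rightarrow> real. x i hx hy c)"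
    by (rule continuous_on_product_then_coordinatewise)
  then show ?thesis by (rule continuous_on_subset) simp
qed

lemma realization_plan1_le_1:
  assumes x: "realization_plan1 n p x" and p: "simplex p" and len: "length ha = length hb" "length ha < n"
  shows "x k ha hb (a::'a::finite) \<le> 1"
  using len
proof (induction "length ha" arbitrary: ha hb a)
  case 0
  then have "x k ha hb a \<le> (\<Sum>a\<in>UNIV. x k ha hb a)"
    using realization_plan1D(1)[OF x] by (intro member_le_sum) auto
  also have "\<dots> = p k" using realization_plan1D(2)[OF x] 0 by (simp add: parent_weight_def)
  finally show ?case using simplex_le_1[OF p, of k] by simp
next
  case (Suc m)
  then have "ha \<noteq> []" by auto
  obtain ha' hb' a' b' where e: "ha = ha' @ [a']" "hb = hb' @ [b']" "length ha' = length hb'"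
    by (rule snoc_split[OF Suc.prems(1) \<open>ha \<noteq> []\<close>])
  have "x k ha hb a \<le> (\<Sum>a\<in>UNIV. x k ha hb a)"
    using realization_plan1D(1)[OF x] Suc.prems by (intro member_le_sum) auto
  also have "\<dots> = x k ha' hb' a'" using realization_plan1D(2)[OF x] Suc.prems e by simp
  also have "\<dots> \<le> 1" using Suc.hyps(1)[of ha' hb'] Suc.hyps(2) Suc.prems e by simp
  finally show ?case .
qed

lemma compact_plan_set1:
  assumes p: "simplex p"
  shows "compact (plan_set1 n p :: ('k::finite \<Rightarrow> 'a list \<Rightarrow> 'b list \<Rightarrow> 'a::finite \<Rightarrow> real) set)"
proof -
  define box where "box ha hb = (if length ha = length hb \<and> length ha < n then {0..1} else {0::real})"
    for ha :: "'a list" and hb :: "'b list"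
  define B :: "('k \<Rightarrow> 'a list \<Rightarrow> 'b list \<Rightarrow> 'a \<Rightarrow> real) set"
    where "B = PiE UNIV (\<lambda>k. PiE UNIV (\<lambda>ha. PiE UNIV (\<lambda>hb. PiE UNIV (\<lambda>a. box ha hb))))"
  have "compact B" unfolding B_def box_def by (intro compact_PiE_UNIV) auto
  moreover have "plan_set1 n p \<subseteq> B"
  proof
    fix x :: "'k \<Rightarrow> 'a list \<Rightarrow> 'b list \<Rightarrow> 'a \<Rightarrow> real" assume "x \<in> plan_set1 n p"
    then have r: "realization_plan1 n p x"
      and z: "\<forall>k ha hb a. \<not> (length ha = length hb \<and> length ha < n) \<longrightarrow> x k ha hb a = 0"
      unfolding plan_set1_def by auto
    have "x k ha hb a \<in> box ha hb" for k ha hb a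
    proof (cases "length ha = length hb \<and> length ha < n")
      case True
      then show ?thesis
        using realization_plan1D(1)[OF r] realization_plan1_le_1[OF r p] by (simp add: box_def)
    qed (use z in \<open>simp add: box_def\<close>)
    then show "x \<in> B" unfolding B_def by (simp add: PiE_iff)
  qed
  moreover have "closed (plan_set1 n p :: ('k \<Rightarrow> 'a list \<Rightarrow> 'b list \<Rightarrow> 'a \<Rightarrow> real) set)"
    unfolding plan_set1_def realization_plan1_def
    apply (intro closed_Collect_conj closed_Collect_all closed_Collect_imp closed_Collect_const
        open_Collect_const closed_Collect_le closed_Collect_eq continuous_intros)
    subgoal for k ha hb by (cases "ha = []") (simp_all add: continuous_intros)
    done
  ultimately show ?thesis
    using compact_Int_closed[of B "plan_set1 n p"] by (simp add: Int_absorb1)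
qed

lemma sum_mix:
  fixes f g :: "'i \<Rightarrow> real"
  shows "(\<Sum>i\<in>S. (1 - t) * f i + t * g i) = (1 - t) * sum f S + t * sum g S"
  by (simp add: sum.distrib sum_distrib_left)

lemma weighted_entry_mix_plan:
  "weighted_entry M (mix_plan t x1 x2) l ha hb a b
    = (1 - t) * weighted_entry M x1 l ha hb a b + t * weighted_entry M x2 l ha hb a b"
  unfolding weighted_entry_def mix_plan_def by (simp add: distrib_left mult.left_commute sum_mix)

lemma dual2_plan_payoff_mix_plan1:
  "dual2_plan_payoff M n \<nu> (mix_plan t x1 x2) y = (1 - t) * dual2_plan_payoff M n \<nu> x1 y + t * dual2_plan_payoff M n \<nu> x2 y"
proof -
  have "cond_plan_payoff M n (mix_plan t x1 x2) y l
      = (1 - t) * cond_plan_payoff M n x1 y l + t * cond_plan_payoff M n x2 y l" for l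
    unfolding cond_plan_payoff_def weighted_entry_mix_plan by (simp add: distrib_right mult.assoc sum_mix)
  then have "dual2_plan_payoff M n \<nu> (mix_plan t x1 x2) y = (\<Sum>l\<in>UNIV.
      (1 - t) * (\<nu> l * (\<Sum>b\<in>UNIV. y l [] [] b) + cond_plan_payoff M n x1 y l) +
      t * (\<nu> l * (\<Sum>b\<in>UNIV. y l [] [] b) + cond_plan_payoff M n x2 y l))"
    unfolding dual2_plan_payoff_def by (intro sum.cong refl) (simp add: algebra_simps)
  then show ?thesis unfolding dual2_plan_payoff_def sum_mix .
qed

lemma dual2_plan_payoff_mix_plan2:
  "dual2_plan_payoff M n \<nu> x (mix_plan t y1 y2) = (1 - t) * dual2_plan_payoff M n \<nu> x y1 + t * dual2_plan_payoff M n \<nu> x y2"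
proof -
  have "cond_plan_payoff M n x (mix_plan t y1 y2) l
      = (1 - t) * cond_plan_payoff M n x y1 l + t * cond_plan_payoff M n x y2 l" for l
    unfolding cond_plan_payoff_def mix_plan_def by (simp add: distrib_left mult.left_commute sum_mix)
  moreover have "\<nu> l * (\<Sum>b\<in>UNIV. mix_plan t y1 y2 l [] [] b)
      = (1 - t) * (\<nu> l * (\<Sum>b\<in>UNIV. y1 l [] [] b)) + t * (\<nu> l * (\<Sum>b\<in>UNIV. y2 l [] [] b))" for l
    unfolding mix_plan_def sum_mix by (simp add: algebra_simps)
  ultimately have "dual2_plan_payoff M n \<nu> x (mix_plan t y1 y2) = (\<Sum>l\<in>UNIV.
      (1 - t) * (\<nu> l * (\<Sum>b\<in>UNIV. y1 l [] [] b) + cond_plan_payoff M n x y1 l) +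
      t * (\<nu> l * (\<Sum>b\<in>UNIV. y2 l [] [] b) + cond_plan_payoff M n x y2 l))"
    unfolding dual2_plan_payoff_def by (intro sum.cong refl) (simp add: algebra_simps)
  then show ?thesis unfolding dual2_plan_payoff_def sum_mix .
qed

lemma continuous_on_dual2_plan_payoff: "continuous_on S (\<lambda>x. dual2_plan_payoff M n \<nu> x y)"
  unfolding dual2_plan_payoff_def cond_plan_payoff_def weighted_entry_def
  by (intro continuous_intros)

lemma dual2_plan_payoff_plan_of_strategy_of_plan1:
  assumes "realization_plan1 n p x"
  shows "dual2_plan_payoff M n \<nu> (plan_of_strategy1 n p (strategy_of_plan1 p x)) y = dual2_plan_payoff M n \<nu> x y"
proof -
  have "weighted_entry M (plan_of_strategy1 n p (strategy_of_plan1 p x)) l (fst h) (snd h) a b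
      = weighted_entry M x l (fst h) (snd h) a b" if "h \<in> histories m" "m < n" for l m h a b
    using that unfolding weighted_entry_def
    by (intro sum.cong refl) (simp add: mem_histories plan_of_strategy_of_plan1[OF assms])
  then show ?thesis unfolding dual2_plan_payoff_def cond_plan_payoff_def by simp
qed

section \<open>The linear program of part (i)\<close>

definition parent_entry ::
  "('l \<Rightarrow> real) \<Rightarrow> ('l \<Rightarrow> 'a list \<Rightarrow> 'b list \<Rightarrow> 'a \<Rightarrow> 'b \<Rightarrow> real) \<Rightarrow> 'l \<Rightarrow> 'a list \<Rightarrow> 'b list \<Rightarrow> real" where
  "parent_entry u0 u l ha hb = (if ha = [] then u0 l else u l (butlast ha) (butlast hb) (last ha) (last hb))"

definition lp2_slack ::
  "('k::finite \<Rightarrow> 'l \<Rightarrow> 'a::finite \<Rightarrow> 'b \<Rightarrow> real) \<Rightarrow> ('k \<Rightarrow> 'a list \<Rightarrow> 'b list \<Rightarrow> 'a \<Rightarrow> real)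
   \<Rightarrow> ('l \<Rightarrow> 'a list \<Rightarrow> 'b list \<Rightarrow> 'a \<Rightarrow> 'b \<Rightarrow> real) \<Rightarrow> ('l \<Rightarrow> real) \<Rightarrow> 'l \<Rightarrow> 'a list \<Rightarrow> 'b list \<Rightarrow> 'b \<Rightarrow> real" where
  "lp2_slack M x u u0 l ha hb b =
     (\<Sum>a\<in>UNIV. weighted_entry M x l ha hb a b + u l ha hb a b) - parent_entry u0 u l ha hb"

lemma sum_lessThan_telescope_vanishing:
  fixes C D :: "nat \<Rightarrow> 'r::ab_group_add"
  assumes "1 \<le> n" "\<And>m. Suc m < n \<Longrightarrow> C (Suc m) = D m" "D (n - 1) = 0"
  shows "(\<Sum>m<n. D m - C m) = - C 0"
proof -
  have "(\<Sum>m<j. D m - C m) = D (j - 1) - C 0" if "1 \<le> j" "j \<le> n" for j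
    using that
  proof (induction j)
    case (Suc j)
    then show ?case using assms(2)[of "j - 1"] by (cases "j = 0") auto
  qed simp
  then show ?thesis using assms(1,3) by simp
qed

lemma sum_mult_slack:
  fixes y :: "'b::finite \<Rightarrow> real" and G U :: "'a::finite \<Rightarrow> 'b \<Rightarrow> real"
  shows "(\<Sum>b\<in>UNIV. y b * ((\<Sum>a\<in>UNIV. G a b + U a b) - c)) =
    (\<Sum>a\<in>UNIV. \<Sum>b\<in>UNIV. G a b * y b) + (\<Sum>a\<in>UNIV. \<Sum>b\<in>UNIV. y b * U a b) - (\<Sum>b\<in>UNIV. y b * c)"
proof -
  have "(\<Sum>a\<in>UNIV. \<Sum>b\<in>UNIV. G a b * y b) = (\<Sum>b\<in>UNIV. \<Sum>a\<in>UNIV. y b * G a b)"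
    by (subst sum.swap) (simp add: mult.commute)
  moreover have "(\<Sum>a\<in>UNIV. \<Sum>b\<in>UNIV. y b * U a b) = (\<Sum>b\<in>UNIV. \<Sum>a\<in>UNIV. y b * U a b)"
    by (rule sum.swap)
  ultimately show ?thesis
    by (simp add: sum.distrib sum_subtractf right_diff_distrib distrib_left sum_distrib_left)
qed

lemma cond_plan_payoff_eq_slack:
  fixes M :: "'k::finite \<Rightarrow> 'l::finite \<Rightarrow> 'a::finite \<Rightarrow> 'b::finite \<Rightarrow> real"
  assumes n: "1 \<le> n" and y: "realization_plan2 n q y"
    and u: "\<forall>l ha hb a b. length ha = n - 1 \<and> length hb = n - 1 \<longrightarrow> u l ha hb a b = 0"
  shows "cond_plan_payoff M n x y l = (\<Sum>b\<in>UNIV. y l [] [] b) * u0 l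
      + (\<Sum>m<n. \<Sum>h\<in>histories m. \<Sum>b\<in>UNIV. y l (fst h) (snd h) b * lp2_slack M x u u0 l (fst h) (snd h) b)"
proof -
  define T where "T m = (\<Sum>h\<in>histories m. \<Sum>a\<in>UNIV. \<Sum>b\<in>UNIV.
    weighted_entry M x l (fst h) (snd h) a b * y l (fst h) (snd h) b)" for m
  define U where "U m = (\<Sum>h\<in>histories m. \<Sum>a\<in>UNIV. \<Sum>b\<in>UNIV.
    y l (fst h) (snd h) b * u l (fst h) (snd h) a b)" for m
  define P where "P m = (\<Sum>h\<in>histories m. \<Sum>b\<in>UNIV.
    y l (fst h) (snd h) b * parent_entry u0 u l (fst h) (snd h))" for m
  define S where "S m = (\<Sum>h\<in>histories m. \<Sum>b\<in>UNIV.
    y l (fst h) (snd h) b * lp2_slack M x u u0 l (fst h) (snd h) b)" for m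
  have "S m = T m + (U m - P m)" for m
    unfolding S_def T_def U_def P_def lp2_slack_def sum_mult_slack
    by (simp only: sum_subtractf sum.distrib add_diff_eq)
  then have "(\<Sum>m<n. S m) = (\<Sum>m<n. T m) + (\<Sum>m<n. U m - P m)"
    by (simp only: sum.distrib)
  moreover have "P 0 = (\<Sum>b\<in>UNIV. y l [] [] b) * u0 l"
    unfolding P_def parent_entry_def by (simp add: histories_0 sum_distrib_right)
  \<comment> \<open>a stage-(m+1) parent entry, weighted by the child rows of y, is the stage-m entry of u\<close>
  moreover have "P (Suc m) = U m" if "Suc m < n" for m
  proof -
    have "P (Suc m) = (\<Sum>h\<in>histories m. \<Sum>a\<in>UNIV. \<Sum>b\<in>UNIV.
        (\<Sum>b'\<in>UNIV. y l (fst h @ [a]) (snd h @ [b]) b') * u l (fst h) (snd h) a b)"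
      unfolding P_def parent_entry_def sum_histories_Suc by (simp add: sum_distrib_right)
    also have "\<dots> = U m" unfolding U_def
      using y that by (intro sum.cong refl) (simp add: realization_plan2_def mem_histories)
    finally show ?thesis .
  qed
  moreover have "U (n - 1) = 0" unfolding U_def using u by (intro sum.neutral) (auto simp: mem_histories)
  ultimately have "(\<Sum>m<n. S m) = (\<Sum>m<n. T m) - (\<Sum>b\<in>UNIV. y l [] [] b) * u0 l"
    using sum_lessThan_telescope_vanishing[OF n, of P U] by simp
  then show ?thesis unfolding cond_plan_payoff_def T_def S_def by simp
qed

lemma lp2_slack_nonneg:
  fixes M :: "'k::finite \<Rightarrow> 'l::finite \<Rightarrow> 'a::finite \<Rightarrow> 'b::finite \<Rightarrow> real"
  assumes lp: "lp2_feasible M n p \<nu> x u u0 ut" and h: "h \<in> histories m" and m: "m < n"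
  shows "0 \<le> lp2_slack M x u u0 l (fst h) (snd h) b"
proof (cases "fst h = []")
  case True
  then have "snd h = []" using h by (auto simp: mem_histories)
  then show ?thesis
    using lp True unfolding lp2_feasible_def lp2_slack_def parent_entry_def weighted_entry_def by auto
next
  case False
  have "length (fst h) = length (snd h)" using h by (simp add: mem_histories)
  then obtain ha hb as bs where e: "fst h = ha @ [as]" "snd h = hb @ [bs]" "length ha = length hb"
    using False by (rule snoc_split)
  then have "1 \<le> m \<and> m \<le> n - 1 \<and> length ha = m - 1 \<and> length hb = m - 1"
    using h m by (auto simp: mem_histories)
  then have "u l ha hb as bs \<le> (\<Sum>a\<in>UNIV. (\<Sum>k\<in>UNIV. M k l a b * x k (ha @ [as]) (hb @ [bs]) a)
      + u l (ha @ [as]) (hb @ [bs]) a b)"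
    using lp unfolding lp2_feasible_def by blast
  then show ?thesis using e unfolding lp2_slack_def parent_entry_def weighted_entry_def by simp
qed

lemma lp2_feasible_le_dual2_plan_payoff:
  fixes M :: "'k::finite \<Rightarrow> 'l::finite \<Rightarrow> 'a::finite \<Rightarrow> 'b::finite \<Rightarrow> real"
  assumes n: "1 \<le> n" and lp: "lp2_feasible M n p \<nu> x u u0 ut"
    and y: "realization_plan2 n q y" and q: "simplex q"
  shows "ut \<le> dual2_plan_payoff M n \<nu> x y"
proof -
  have u: "\<forall>l ha hb a b. length ha = n - 1 \<and> length hb = n - 1 \<longrightarrow> u l ha hb a b = 0"
    using lp unfolding lp2_feasible_def by blast
  have root: "(\<Sum>b\<in>UNIV. y l [] [] b) = q l" for l
    using y n unfolding realization_plan2_def by auto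
  have "ut = (\<Sum>l\<in>UNIV. q l * ut)"
    using q unfolding simplex_def by (simp add: sum_distrib_right[symmetric])
  also have "\<dots> \<le> (\<Sum>l\<in>UNIV. q l * (\<nu> l + u0 l)
      + (\<Sum>m<n. \<Sum>h\<in>histories m. \<Sum>b\<in>UNIV. y l (fst h) (snd h) b * lp2_slack M x u u0 l (fst h) (snd h) b))"
  proof (intro sum_mono add_increasing2)
    fix l
    show "q l * ut \<le> q l * (\<nu> l + u0 l)"
      using q lp unfolding simplex_def lp2_feasible_def by (intro mult_left_mono) (auto simp: add.commute)
    show "0 \<le> (\<Sum>m<n. \<Sum>h\<in>histories m. \<Sum>b\<in>UNIV. y l (fst h) (snd h) b * lp2_slack M x u u0 l (fst h) (snd h) b)"
    proof (intro sum_nonneg mult_nonneg_nonneg)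
      fix m and h :: "'a list \<times> 'b list" and b assume m: "m \<in> {..<n}" and h: "h \<in> histories m"
      show "0 \<le> y l (fst h) (snd h) b" using y m h unfolding realization_plan2_def mem_histories by auto
      show "0 \<le> lp2_slack M x u u0 l (fst h) (snd h) b" using lp2_slack_nonneg[OF lp h] m by auto
    qed
  qed
  also have "\<dots> = dual2_plan_payoff M n \<nu> x y"
    unfolding dual2_plan_payoff_def cond_plan_payoff_eq_slack[OF n y u, of M x l u0 for l] root
    by (simp add: algebra_simps)
  finally show ?thesis .
qed

text \<open>Backward induction for a best reply of player 2's type l against the plan x:
  best_response_value M x d l ha hb is the least payoff type l can hold player 1 to from
  history (ha, hb) with d + 1 stages left.\<close>

fun best_response_value ::
  "('k::finite \<Rightarrow> 'l \<Rightarrow> 'a::finite \<Rightarrow> 'b::finite \<Rightarrow> real) \<Rightarrow> ('k \<Rightarrow> 'a list \<Rightarrow> 'b list \<Rightarrow> 'a \<Rightarrow> real)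
   \<Rightarrow> nat \<Rightarrow> 'l \<Rightarrow> 'a list \<Rightarrow> 'b list \<Rightarrow> real" where
  "best_response_value M x 0 l ha hb = Min (range (\<lambda>b. \<Sum>a\<in>UNIV. weighted_entry M x l ha hb a b))"
| "best_response_value M x (Suc d) l ha hb = Min (range (\<lambda>b. \<Sum>a\<in>UNIV.
     weighted_entry M x l ha hb a b + best_response_value M x d l (ha @ [a]) (hb @ [b])))"

definition bellman_u ::
  "('k::finite \<Rightarrow> 'l \<Rightarrow> 'a::finite \<Rightarrow> 'b::finite \<Rightarrow> real) \<Rightarrow> ('k \<Rightarrow> 'a list \<Rightarrow> 'b list \<Rightarrow> 'a \<Rightarrow> real)
   \<Rightarrow> nat \<Rightarrow> 'l \<Rightarrow> 'a list \<Rightarrow> 'b list \<Rightarrow> 'a \<Rightarrow> 'b \<Rightarrow> real" where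
  "bellman_u M x n l ha hb a b =
     (if Suc (length ha) < n then best_response_value M x (n - 2 - length ha) l (ha @ [a]) (hb @ [b]) else 0)"

definition bellman_u0 ::
  "('k::finite \<Rightarrow> 'l \<Rightarrow> 'a::finite \<Rightarrow> 'b::finite \<Rightarrow> real) \<Rightarrow> ('k \<Rightarrow> 'a list \<Rightarrow> 'b list \<Rightarrow> 'a \<Rightarrow> real)
   \<Rightarrow> nat \<Rightarrow> 'l \<Rightarrow> real" where
  "bellman_u0 M x n l = best_response_value M x (n - 1) l [] []"

lemma best_response_value_eq:
  assumes "length ha < n"
  shows "best_response_value M x (n - 1 - length ha) l ha hb
    = Min (range (\<lambda>b. \<Sum>a\<in>UNIV. weighted_entry M x l ha hb a b + bellman_u M x n l ha hb a b))"
proof (cases "Suc (length ha) < n")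
  case True
  then have "n - 1 - length ha = Suc (n - 2 - length ha)" by simp
  then show ?thesis using True unfolding bellman_u_def by simp
next
  case False
  then have "n - 1 - length ha = 0" using assms by simp
  then show ?thesis using False unfolding bellman_u_def by simp
qed

lemma parent_entry_bellman:
  assumes "length ha = length hb" "length ha < n"
  shows "parent_entry (bellman_u0 M x n) (bellman_u M x n) l ha hb = best_response_value M x (n - 1 - length ha) l ha hb"
proof (cases "ha = []")
  case True
  then show ?thesis using assms unfolding parent_entry_def bellman_u0_def by simp
next
  case False
  obtain ha' hb' as bs where e: "ha = ha' @ [as]" "hb = hb' @ [bs]" "length ha' = length hb'"
    by (rule snoc_split[OF assms(1) False])
  then have "Suc (length ha') < n" "n - 2 - length ha' = n - 1 - length ha" using assms by auto
  then show ?thesis using e unfolding parent_entry_def bellman_u_def by simp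
qed

lemma lp2_feasible_bellman:
  fixes M :: "'k::finite \<Rightarrow> 'l::finite \<Rightarrow> 'a::finite \<Rightarrow> 'b::finite \<Rightarrow> real"
  assumes n: "1 \<le> n" and x: "realization_plan1 n p x" and ut: "\<forall>l. ut \<le> bellman_u0 M x n l + \<nu> l"
  shows "lp2_feasible M n p \<nu> x (bellman_u M x n) (bellman_u0 M x n) ut"
  unfolding lp2_feasible_def
proof (intro conjI allI impI)
  show "realization_plan1 n p x" by (rule x)
  show "ut \<le> bellman_u0 M x n l + \<nu> l" for l using ut by blast
  show "bellman_u M x n l ha hb a b = 0" if "length ha = n - 1 \<and> length hb = n - 1" for l ha hb a b
    using that n unfolding bellman_u_def by auto
next
  fix l b
  have "bellman_u0 M x n l = parent_entry (bellman_u0 M x n) (bellman_u M x n) l [] []"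
    unfolding parent_entry_def by simp
  also have "\<dots> = best_response_value M x (n - 1 - length ([] :: 'a list)) l [] []"
    by (rule parent_entry_bellman) (use n in auto)
  also have "\<dots> = Min (range (\<lambda>b. \<Sum>a\<in>UNIV. weighted_entry M x l [] [] a b + bellman_u M x n l [] [] a b))"
    by (rule best_response_value_eq) (use n in auto)
  also have "\<dots> \<le> (\<Sum>a\<in>UNIV. weighted_entry M x l [] [] a b + bellman_u M x n l [] [] a b)"
    by (rule Min_le) auto
  finally show "bellman_u0 M x n l \<le> (\<Sum>a\<in>UNIV. (\<Sum>k\<in>UNIV. M k l a b * x k [] [] a) + bellman_u M x n l [] [] a b)"
    unfolding weighted_entry_def .
next
  fix s l and ha :: "'a list" and hb :: "'b list" and as bs b
  assume "1 \<le> s \<and> s \<le> n - 1 \<and> length ha = s - 1 \<and> length hb = s - 1"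
  then have len: "length (ha @ [as]) = length (hb @ [bs])" "length (ha @ [as]) < n" by auto
  have "bellman_u M x n l ha hb as bs = parent_entry (bellman_u0 M x n) (bellman_u M x n) l (ha @ [as]) (hb @ [bs])"
    unfolding parent_entry_def by simp
  also have "\<dots> \<le> (\<Sum>a\<in>UNIV. weighted_entry M x l (ha @ [as]) (hb @ [bs]) a b + bellman_u M x n l (ha @ [as]) (hb @ [bs]) a b)"
    unfolding parent_entry_bellman[OF len] best_response_value_eq[OF len(2)] by (intro Min_le) auto
  finally show "bellman_u M x n l ha hb as bs \<le> (\<Sum>a\<in>UNIV. (\<Sum>k\<in>UNIV. M k l a b * x k (ha @ [as]) (hb @ [bs]) a)
      + bellman_u M x n l (ha @ [as]) (hb @ [bs]) a b)"
    unfolding weighted_entry_def .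
qed

definition greedy_strategy ::
  "('k::finite \<Rightarrow> 'l \<Rightarrow> 'a::finite \<Rightarrow> 'b::finite \<Rightarrow> real) \<Rightarrow> ('k \<Rightarrow> 'a list \<Rightarrow> 'b list \<Rightarrow> 'a \<Rightarrow> real)
   \<Rightarrow> nat \<Rightarrow> 'l \<Rightarrow> 'a list \<Rightarrow> 'b list \<Rightarrow> 'b \<Rightarrow> real" where
  "greedy_strategy M x n l ha hb b =
     (if b = (SOME b'. \<forall>b''. (\<Sum>a\<in>UNIV. weighted_entry M x l ha hb a b' + bellman_u M x n l ha hb a b')
                        \<le> (\<Sum>a\<in>UNIV. weighted_entry M x l ha hb a b'' + bellman_u M x n l ha hb a b''))
      then 1 else 0)"

lemma stoch2_greedy_strategy: "stoch2 n (greedy_strategy M x n)"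
  unfolding stoch2_def greedy_strategy_def by auto

lemma greedy_strategy_pos_imp_min:
  assumes "greedy_strategy M x n l ha hb b \<noteq> 0"
  shows "(\<Sum>a\<in>UNIV. weighted_entry M x l ha hb a b + bellman_u M x n l ha hb a b)
    = Min (range (\<lambda>b. \<Sum>a\<in>UNIV. weighted_entry M x l ha hb a b + bellman_u M x n l ha hb a b))"
proof -
  let ?f = "\<lambda>b. \<Sum>a\<in>UNIV. weighted_entry M x l ha hb a b + bellman_u M x n l ha hb a b"
  obtain b0 where "?f b0 = Min (range ?f)" using Min_in[of "range ?f"] by fastforce
  then have "\<forall>b''. ?f b0 \<le> ?f b''" by simp
  then have "\<forall>b''. ?f (SOME b'. \<forall>b''. ?f b' \<le> ?f b'') \<le> ?f b''" by (rule someI)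
  moreover have "b = (SOME b'. \<forall>b''. ?f b' \<le> ?f b'')"
    using assms unfolding greedy_strategy_def by (auto split: if_splits)
  ultimately show ?thesis by (intro antisym Min_le Min_in) auto
qed

lemma dual2_plan_payoff_greedy:
  fixes M :: "'k::finite \<Rightarrow> 'l::finite \<Rightarrow> 'a::finite \<Rightarrow> 'b::finite \<Rightarrow> real"
  assumes n: "1 \<le> n"
  shows "dual2_plan_payoff M n \<nu> x (plan_of_strategy2 n (\<lambda>l. if l = l0 then 1 else 0) (greedy_strategy M x n))
    = \<nu> l0 + bellman_u0 M x n l0"
proof -
  let ?q = "\<lambda>l. if l = l0 then 1 else (0::real)"
  let ?y = "plan_of_strategy2 n ?q (greedy_strategy M x n)"
  have y: "realization_plan2 n ?q ?y"
    by (rule realization_plan2_plan_of_strategy2) (auto intro: stoch2_greedy_strategy)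
  have u: "\<forall>l ha hb a b. length ha = n - 1 \<and> length hb = n - 1 \<longrightarrow> bellman_u M x n l ha hb a b = 0"
    unfolding bellman_u_def using n by auto
  \<comment> \<open>the greedy reply only plays actions with zero slack\<close>
  have "?y l (fst h) (snd h) b * lp2_slack M x (bellman_u M x n) (bellman_u0 M x n) l (fst h) (snd h) b = 0"
    if "h \<in> histories m" "m < n" for l m h b
  proof (cases "greedy_strategy M x n l (fst h) (snd h) b = 0")
    case False
    have len: "length (fst h) = length (snd h)" "length (fst h) < n" using that by (auto simp: mem_histories)
    show ?thesis unfolding lp2_slack_def parent_entry_bellman[OF len] best_response_value_eq[OF len(2)]
      greedy_strategy_pos_imp_min[OF False] by simp
  qed (simp add: plan_of_strategy2_eq)
  then have "(\<Sum>m<n. \<Sum>h\<in>histories m. \<Sum>b\<in>UNIV.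
      ?y l (fst h) (snd h) b * lp2_slack M x (bellman_u M x n) (bellman_u0 M x n) l (fst h) (snd h) b) = 0" for l
    by (intro sum.neutral ballI) auto
  moreover have root: "(\<Sum>b\<in>UNIV. ?y l [] [] b) = ?q l" for l
    using y n unfolding realization_plan2_def by auto
  ultimately have "cond_plan_payoff M n x ?y l = ?q l * bellman_u0 M x n l" for l
    using cond_plan_payoff_eq_slack[OF n y u, of M x l "bellman_u0 M x n"] by simp
  then have "dual2_plan_payoff M n \<nu> x ?y = (\<Sum>l\<in>UNIV. ?q l * (\<nu> l + bellman_u0 M x n l))"
    unfolding dual2_plan_payoff_def root by (simp add: algebra_simps)
  also have "\<dots> = (\<Sum>l\<in>UNIV. if l = l0 then \<nu> l + bellman_u0 M x n l else 0)"
    by (intro sum.cong) auto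
  also have "\<dots> = \<nu> l0 + bellman_u0 M x n l0" by simp
  finally show ?thesis .
qed

section \<open>Value and security strategies of the type 2 dual game\<close>

lemma simplex_uniform: "simplex (\<lambda>i::'i. 1 / real (card (UNIV :: 'i::finite set)))"
  unfolding simplex_def by simp

lemma stoch1_uniform: "stoch1 n (\<lambda>k ha hb (a::'a). 1 / real (card (UNIV :: 'a::finite set)))"
  unfolding stoch1_def by simp

lemma stoch2_uniform: "stoch2 n (\<lambda>l ha hb (b::'b). 1 / real (card (UNIV :: 'b::finite set)))"
  unfolding stoch2_def by simp

context
  fixes M :: "'k::finite \<Rightarrow> 'l::finite \<Rightarrow> 'a::finite \<Rightarrow> 'b::finite \<Rightarrow> real"
    and n :: nat and p :: "'k \<Rightarrow> real" and \<nu> :: "'l \<Rightarrow> real"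
  assumes p: "simplex p"
begin

lemma dual2_payoff_abs_le:
  assumes "stoch1 n \<sigma>" "simplex q" "stoch2 n \<tau>"
  shows "\<bar>dual2_payoff M n p \<nu> \<sigma> q \<tau>\<bar> \<le> (\<Sum>l\<in>UNIV. \<bar>\<nu> l\<bar>) + real n * max_abs_entry M"
  using dual2_payoff_bound[OF p assms(2,1,3)] .

lemma bdd_below_dual2_payoff:
  assumes "stoch1 n \<sigma>"
  shows "bdd_below ((\<lambda>qt. dual2_payoff M n p \<nu> \<sigma> (fst qt) (snd qt)) ` {(q, \<tau>). simplex q \<and> stoch2 n \<tau>})"
  using dual2_payoff_abs_le[OF assms]
  by (intro bdd_belowI[where m="- ((\<Sum>l\<in>UNIV. \<bar>\<nu> l\<bar>) + real n * max_abs_entry M)"]) (force simp: abs_le_iff)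

lemma bdd_above_dual2_payoff:
  assumes "simplex q" "stoch2 n \<tau>"
  shows "bdd_above ((\<lambda>\<sigma>. dual2_payoff M n p \<nu> \<sigma> q \<tau>) ` {\<sigma>. stoch1 n \<sigma>})"
  using dual2_payoff_abs_le[OF _ assms]
  by (intro bdd_aboveI[where M="(\<Sum>l\<in>UNIV. \<bar>\<nu> l\<bar>) + real n * max_abs_entry M"]) (force simp: abs_le_iff)

lemma dual2_guarantee_le_payoff:
  assumes "stoch1 n \<sigma>" "simplex q" "stoch2 n \<tau>"
  shows "dual2_guarantee M n p \<nu> \<sigma> \<le> dual2_payoff M n p \<nu> \<sigma> q \<tau>"
  unfolding dual2_guarantee_def using assms
  by (intro cINF_lower2[OF bdd_below_dual2_payoff[OF assms(1)], of "(q, \<tau>)"]) auto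

lemma dual2_guarantee_le_value:
  fixes \<sigma> :: "'k \<Rightarrow> 'a list \<Rightarrow> 'b list \<Rightarrow> 'a \<Rightarrow> real"
  assumes "stoch1 n \<sigma>"
  shows "dual2_guarantee M n p \<nu> \<sigma> \<le> dual2_value M n p \<nu>"
proof -
  have "dual2_guarantee M n p \<nu> \<sigma>' \<le> (\<Sum>l\<in>UNIV. \<bar>\<nu> l\<bar>) + real n * max_abs_entry M"
    if "stoch1 n \<sigma>'" for \<sigma>' :: "'k \<Rightarrow> 'a list \<Rightarrow> 'b list \<Rightarrow> 'a \<Rightarrow> real"
    using dual2_guarantee_le_payoff[OF that simplex_uniform stoch2_uniform]
      dual2_payoff_abs_le[OF that simplex_uniform stoch2_uniform] by (auto simp: abs_le_iff)
  then show ?thesis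
    unfolding dual2_value_def using assms by (intro cSUP_upper bdd_aboveI2) auto
qed

lemma dual2_value_le_upper_value: "dual2_value M n p \<nu> \<le> dual2_upper_value M n p \<nu>"
  unfolding dual2_value_def dual2_upper_value_def
proof (intro cSUP_least cINF_greatest)
  show "{\<sigma>. stoch1 n \<sigma>} \<noteq> {}" using stoch1_uniform by blast
  show "{(q, \<tau>). simplex q \<and> stoch2 n \<tau>} \<noteq> {}" using simplex_uniform stoch2_uniform by blast
  fix \<sigma> :: "'k \<Rightarrow> 'a list \<Rightarrow> 'b list \<Rightarrow> 'a \<Rightarrow> real"
    and qt :: "('l \<Rightarrow> real) \<times> ('l \<Rightarrow> 'a list \<Rightarrow> 'b list \<Rightarrow> 'b \<Rightarrow> real)"
  assume "\<sigma> \<in> {\<sigma>. stoch1 n \<sigma>}" "qt \<in> {(q, \<tau>). simplex q \<and> stoch2 n \<tau>}"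
  then show "dual2_guarantee M n p \<nu> \<sigma> \<le> (SUP \<sigma>\<in>{\<sigma>. stoch1 n \<sigma>}. dual2_payoff M n p \<nu> \<sigma> (fst qt) (snd qt))"
    using dual2_guarantee_le_payoff bdd_above_dual2_payoff
    by (intro cSUP_upper2) (auto simp: case_prod_beta)
qed

lemma dual2_payoff_strategy_of_plan1:
  assumes "1 \<le> n" "realization_plan1 n p x" "stoch2 n \<tau>"
  shows "dual2_payoff M n p \<nu> (strategy_of_plan1 p x) q \<tau> = dual2_plan_payoff M n \<nu> x (plan_of_strategy2 n q \<tau>)"
  using dual2_payoff_eq_plan_payoff[OF assms(1) stoch1_strategy_of_plan1[OF assms(2)] assms(3)]
    dual2_plan_payoff_plan_of_strategy_of_plan1[OF assms(2)] by simp

lemma lp2_feasible_le_guarantee: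
  assumes n: "1 \<le> n" and lp: "lp2_feasible M n p \<nu> x u u0 ut"
  shows "ut \<le> dual2_guarantee M n p \<nu> (strategy_of_plan1 p x)"
  unfolding dual2_guarantee_def
proof (rule cINF_greatest)
  show "{(q, \<tau>). simplex q \<and> stoch2 n \<tau>} \<noteq> {}" using simplex_uniform stoch2_uniform by blast
  fix qt :: "('l \<Rightarrow> real) \<times> ('l \<Rightarrow> 'a list \<Rightarrow> 'b list \<Rightarrow> 'b \<Rightarrow> real)"
  assume "qt \<in> {(q, \<tau>). simplex q \<and> stoch2 n \<tau>}"
  then have q: "simplex (fst qt)" and \<tau>: "stoch2 n (snd qt)" by auto
  have "realization_plan2 n (fst qt) (plan_of_strategy2 n (fst qt) (snd qt))"
    using q \<tau> unfolding simplex_def by (intro realization_plan2_plan_of_strategy2) auto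
  then have "ut \<le> dual2_plan_payoff M n \<nu> x (plan_of_strategy2 n (fst qt) (snd qt))"
    by (rule lp2_feasible_le_dual2_plan_payoff[OF n lp _ q])
  also have "\<dots> = dual2_payoff M n p \<nu> (strategy_of_plan1 p x) (fst qt) (snd qt)"
    using lp \<tau> unfolding lp2_feasible_def by (simp add: dual2_payoff_strategy_of_plan1[OF n])
  finally show "ut \<le> dual2_payoff M n p \<nu> (strategy_of_plan1 p x) (fst qt) (snd qt)" .
qed

lemma lp2_feasible_guarantee:
  assumes n: "1 \<le> n" and x: "realization_plan1 n p x"
  shows "lp2_feasible M n p \<nu> x (bellman_u M x n) (bellman_u0 M x n) (dual2_guarantee M n p \<nu> (strategy_of_plan1 p x))"
proof (rule lp2_feasible_bellman[OF n x], intro allI)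
  fix l0 :: 'l
  let ?q = "\<lambda>l. if l = l0 then 1 else 0 :: real"
  have "simplex ?q" unfolding simplex_def by simp
  then have "dual2_guarantee M n p \<nu> (strategy_of_plan1 p x)
      \<le> dual2_payoff M n p \<nu> (strategy_of_plan1 p x) ?q (greedy_strategy M x n)"
    by (rule dual2_guarantee_le_payoff[OF stoch1_strategy_of_plan1[OF x] _ stoch2_greedy_strategy])
  also have "\<dots> = \<nu> l0 + bellman_u0 M x n l0"
    using dual2_payoff_strategy_of_plan1[OF n x stoch2_greedy_strategy[of n M x]]
      dual2_plan_payoff_greedy[OF n, of M \<nu> x l0] by simp
  finally show "dual2_guarantee M n p \<nu> (strategy_of_plan1 p x) \<le> bellman_u0 M x n l0 + \<nu> l0" by simp
qed

lemma bdd_below_dual2_best_reply_values: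
  "bdd_below ((\<lambda>qt. SUP \<sigma>\<in>{\<sigma>. stoch1 n \<sigma>}. dual2_payoff M n p \<nu> \<sigma> (fst qt) (snd qt))
     ` {(q, \<tau>). simplex q \<and> stoch2 n \<tau>})"
proof (rule bdd_belowI2)
  fix qt :: "('l \<Rightarrow> real) \<times> ('l \<Rightarrow> 'a list \<Rightarrow> 'b list \<Rightarrow> 'b \<Rightarrow> real)"
  assume "qt \<in> {(q, \<tau>). simplex q \<and> stoch2 n \<tau>}"
  then have q: "simplex (fst qt)" and \<tau>: "stoch2 n (snd qt)" by auto
  have "- ((\<Sum>l\<in>UNIV. \<bar>\<nu> l\<bar>) + real n * max_abs_entry M)
      \<le> dual2_payoff M n p \<nu> (\<lambda>k ha hb a. 1 / real (card (UNIV :: 'a set))) (fst qt) (snd qt)"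
    using dual2_payoff_abs_le[OF stoch1_uniform q \<tau>] by (simp add: abs_le_iff)
  also have "\<dots> \<le> (SUP \<sigma>\<in>{\<sigma>. stoch1 n \<sigma>}. dual2_payoff M n p \<nu> \<sigma> (fst qt) (snd qt))"
    using bdd_above_dual2_payoff[OF q \<tau>] stoch1_uniform by (intro cSUP_upper) auto
  finally show "- ((\<Sum>l\<in>UNIV. \<bar>\<nu> l\<bar>) + real n * max_abs_entry M)
      \<le> (SUP \<sigma>\<in>{\<sigma>. stoch1 n \<sigma>}. dual2_payoff M n p \<nu> \<sigma> (fst qt) (snd qt))" .
qed

lemma upper_value_lt_imp_plan_beats:
  assumes n: "1 \<le> n" and c: "c < dual2_upper_value M n p \<nu>" and y: "y \<in> plan_set2 n"
  shows "\<exists>x\<in>plan_set1 n p. c < dual2_plan_payoff M n \<nu> x y"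
proof -
  obtain q \<tau> where q: "simplex q" and \<tau>: "stoch2 n \<tau>" and y_eq: "y = plan_of_strategy2 n q \<tau>"
    using plan_set2_plan_of_strategy2[OF y] by blast
  have "dual2_upper_value M n p \<nu> \<le> (SUP \<sigma>\<in>{\<sigma>. stoch1 n \<sigma>}. dual2_payoff M n p \<nu> \<sigma> q \<tau>)"
    unfolding dual2_upper_value_def using q \<tau>
    by (intro cINF_lower2[OF bdd_below_dual2_best_reply_values, of "(q, \<tau>)"]) auto
  then have "c < (SUP \<sigma>\<in>{\<sigma>. stoch1 n \<sigma>}. dual2_payoff M n p \<nu> \<sigma> q \<tau>)" using c by linarith
  moreover have "{\<sigma>. stoch1 n \<sigma>} \<noteq> ({} :: ('k \<Rightarrow> 'a list \<Rightarrow> 'b list \<Rightarrow> 'a \<Rightarrow> real) set)"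
    using stoch1_uniform by blast
  ultimately obtain \<sigma> where \<sigma>: "stoch1 n \<sigma>" "c < dual2_payoff M n p \<nu> \<sigma> q \<tau>"
    using less_cSUP_iff[OF _ bdd_above_dual2_payoff[OF q \<tau>]] by blast
  have "plan_of_strategy1 n p \<sigma> \<in> plan_set1 n p"
    using p \<sigma>(1) unfolding simplex_def by (intro plan_of_strategy1_mem_plan_set1) auto
  moreover have "dual2_payoff M n p \<nu> \<sigma> q \<tau> = dual2_plan_payoff M n \<nu> (plan_of_strategy1 n p \<sigma>) y"
    unfolding y_eq by (rule dual2_payoff_eq_plan_payoff[OF n \<sigma>(1) \<tau>])
  ultimately show ?thesis using \<sigma>(2) by auto
qed

lemma exists_plan_guaranteeing_upper_value:
  assumes n: "1 \<le> n"
  obtains x where "x \<in> plan_set1 n p"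
    "dual2_upper_value M n p \<nu> \<le> dual2_guarantee M n p \<nu> (strategy_of_plan1 p x)"
proof -
  have p0: "\<forall>k. 0 \<le> p k" using p unfolding simplex_def by auto
  have "\<exists>x0\<in>plan_set1 n p. \<forall>c. (\<forall>y\<in>plan_set2 n. \<exists>x\<in>plan_set1 n p. c < dual2_plan_payoff M n \<nu> x y)
      \<longrightarrow> (\<forall>y\<in>plan_set2 n. c \<le> dual2_plan_payoff M n \<nu> x0 y)"
  proof (rule affine_minimax[where cx = mix_plan and cy = mix_plan])
    show "compact (plan_set1 n p :: ('k \<Rightarrow> 'a list \<Rightarrow> 'b list \<Rightarrow> 'a \<Rightarrow> real) set)"
      by (rule compact_plan_set1[OF p])
    show "plan_set1 n p \<noteq> ({} :: ('k \<Rightarrow> 'a list \<Rightarrow> 'b list \<Rightarrow> 'a \<Rightarrow> real) set)"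
      using plan_of_strategy1_mem_plan_set1[OF p0 stoch1_uniform] by blast
    show "\<forall>x1\<in>plan_set1 n p. \<forall>x2\<in>plan_set1 n p. \<forall>s\<in>{0..1}. mix_plan s x1 x2 \<in> plan_set1 n p"
      using convex_plan_set1 by blast
    show "\<forall>y1\<in>plan_set2 n. \<forall>y2\<in>plan_set2 n. \<forall>t\<in>{0..1}. mix_plan t y1 y2 \<in> plan_set2 n"
      using convex_plan_set2 by blast
  qed (simp_all add: dual2_plan_payoff_mix_plan1 dual2_plan_payoff_mix_plan2 continuous_on_dual2_plan_payoff)
  then obtain x0 where x0: "x0 \<in> plan_set1 n p"
    and H: "\<forall>c. (\<forall>y\<in>plan_set2 n. \<exists>x\<in>plan_set1 n p. c < dual2_plan_payoff M n \<nu> x y)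
      \<longrightarrow> (\<forall>y\<in>plan_set2 n. c \<le> dual2_plan_payoff M n \<nu> x0 y)"
    by blast
  have beats: "c \<le> dual2_plan_payoff M n \<nu> x0 y"
    if "c < dual2_upper_value M n p \<nu>" "y \<in> plan_set2 n" for c y
    using H upper_value_lt_imp_plan_beats[OF n that(1)] that(2) by blast
  have "dual2_upper_value M n p \<nu> \<le> dual2_guarantee M n p \<nu> (strategy_of_plan1 p x0)"
    unfolding dual2_guarantee_def
  proof (rule cINF_greatest)
    show "{(q, \<tau>). simplex q \<and> stoch2 n \<tau>} \<noteq> {}" using simplex_uniform stoch2_uniform by blast
    fix qt :: "('l \<Rightarrow> real) \<times> ('l \<Rightarrow> 'a list \<Rightarrow> 'b list \<Rightarrow> 'b \<Rightarrow> real)"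
    assume "qt \<in> {(q, \<tau>). simplex q \<and> stoch2 n \<tau>}"
    then have q: "simplex (fst qt)" and \<tau>: "stoch2 n (snd qt)" by auto
    have "dual2_upper_value M n p \<nu> \<le> dual2_plan_payoff M n \<nu> x0 (plan_of_strategy2 n (fst qt) (snd qt))"
      by (rule dense_le) (rule beats[OF _ plan_of_strategy2_mem_plan_set2[OF q \<tau>]])
    also have "\<dots> = dual2_payoff M n p \<nu> (strategy_of_plan1 p x0) (fst qt) (snd qt)"
      using x0 unfolding plan_set1_def by (simp add: dual2_payoff_strategy_of_plan1[OF n _ \<tau>])
    finally show "dual2_upper_value M n p \<nu> \<le> dual2_payoff M n p \<nu> (strategy_of_plan1 p x0) (fst qt) (snd qt)" .
  qed
  then show ?thesis using that x0 by blast
qed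

end

theorem dual2_value_lp:
  fixes M :: "'k::finite \<Rightarrow> 'l::finite \<Rightarrow> 'a::finite \<Rightarrow> 'b::finite \<Rightarrow> real"
  assumes n: "1 \<le> n" and p: "simplex p"
  shows
    "dual2_upper_value M n p \<nu> = dual2_value M n p \<nu>
     \<and> (\<exists>x u u0. lp2_feasible M n p \<nu> x u u0 (dual2_value M n p \<nu>))
     \<and> (\<forall>x u u0 ut. lp2_feasible M n p \<nu> x u u0 ut \<longrightarrow> ut \<le> dual2_value M n p \<nu>)
     \<and> (\<forall>x u u0. lp2_feasible M n p \<nu> x u u0 (dual2_value M n p \<nu>) \<longrightarrow>
          dual2_security_strategy M n p \<nu> (strategy_of_plan1 p x)
          \<and> (\<forall>k a. p k > 0 \<longrightarrow> strategy_of_plan1 p x k [] [] a = x k [] [] a / p k))"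
proof (intro conjI allI impI)
  obtain x where x: "x \<in> plan_set1 n p"
    and upper: "dual2_upper_value M n p \<nu> \<le> dual2_guarantee M n p \<nu> (strategy_of_plan1 p x)"
    using exists_plan_guaranteeing_upper_value[OF p n] by blast
  have xr: "realization_plan1 n p x" using x unfolding plan_set1_def by blast
  have "dual2_guarantee M n p \<nu> (strategy_of_plan1 p x) \<le> dual2_value M n p \<nu>"
    by (rule dual2_guarantee_le_value[OF p stoch1_strategy_of_plan1[OF xr]])
  then have upper_eq: "dual2_upper_value M n p \<nu> = dual2_value M n p \<nu>"
    and guarantee_eq: "dual2_guarantee M n p \<nu> (strategy_of_plan1 p x) = dual2_value M n p \<nu>"
    using upper dual2_value_le_upper_value[OF p, of M n \<nu>] by linarith+
  show "dual2_upper_value M n p \<nu> = dual2_value M n p \<nu>" by (rule upper_eq)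
  show "\<exists>x u u0. lp2_feasible M n p \<nu> x u u0 (dual2_value M n p \<nu>)"
    using lp2_feasible_guarantee[OF p n xr, of M \<nu>] unfolding guarantee_eq by blast
next
  fix x u u0 ut assume lp: "lp2_feasible M n p \<nu> x u u0 ut"
  have "stoch1 n (strategy_of_plan1 p x)"
    using lp unfolding lp2_feasible_def by (blast intro: stoch1_strategy_of_plan1)
  then show "ut \<le> dual2_value M n p \<nu>"
    using lp2_feasible_le_guarantee[OF p n lp] dual2_guarantee_le_value[OF p] by (blast intro: order_trans)
next
  fix x u u0 assume lp: "lp2_feasible M n p \<nu> x u u0 (dual2_value M n p \<nu>)"
  have "stoch1 n (strategy_of_plan1 p x)"
    using lp unfolding lp2_feasible_def by (blast intro: stoch1_strategy_of_plan1)
  then show "dual2_security_strategy M n p \<nu> (strategy_of_plan1 p x)"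
    unfolding dual2_security_strategy_def
    using lp2_feasible_le_guarantee[OF p n lp] dual2_guarantee_le_value[OF p] by (blast intro: antisym)
next
  fix x :: "'k \<Rightarrow> 'a list \<Rightarrow> 'b list \<Rightarrow> 'a \<Rightarrow> real" and k a assume "p k > 0"
  then show "strategy_of_plan1 p x k [] [] a = x k [] [] a / p k"
    unfolding strategy_of_plan1_def Let_def by simp
qed

section \<open>The type 1 dual game by exchanging the players\<close>

text \<open>The type 1 dual game is the type 2 dual game with the roles of the players exchanged and
  the payoff negated.\<close>

definition swap_roles :: "('k \<Rightarrow> 'l \<Rightarrow> 'a \<Rightarrow> 'b \<Rightarrow> real) \<Rightarrow> 'l \<Rightarrow> 'k \<Rightarrow> 'b \<Rightarrow> 'a \<Rightarrow> real" where
  "swap_roles M l k b a = - M k l a b"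

definition swap_lp_var ::
  "('k \<Rightarrow> 'a list \<Rightarrow> 'b list \<Rightarrow> 'a \<Rightarrow> 'b \<Rightarrow> real) \<Rightarrow> 'k \<Rightarrow> 'b list \<Rightarrow> 'a list \<Rightarrow> 'b \<Rightarrow> 'a \<Rightarrow> real" where
  "swap_lp_var w k hb ha b a = - w k ha hb a b"

lemma swap_lp_var_swap_lp_var [simp]: "swap_lp_var (swap_lp_var w) = w"
  unfolding swap_lp_var_def by (intro ext) simp

text \<open>For reals, Inf is defined through Sup, so these hold without boundedness assumptions.\<close>

lemma INF_uminus_real: "(INF x\<in>A. - g x) = - (SUP x\<in>A. g x :: real)"
  by (simp add: Inf_real_def image_image)

lemma SUP_uminus_real: "(SUP x\<in>A. - g x) = - (INF x\<in>A. g x :: real)"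
  by (simp add: Inf_real_def image_image)

lemma stoch1_eq_swap_hist_image: "{\<sigma>. stoch1 n \<sigma>} = swap_hist ` {\<tau>. stoch2 n \<tau>}"
  using stoch1_swap_hist by (auto intro!: image_eqI[where x="swap_hist _"]) (metis stoch1_swap_hist swap_hist_swap_hist)

lemma stoch2_pairs_eq_swap_hist_image:
  "{(\<pi>, \<tau>). simplex (\<pi> :: 'k::finite \<Rightarrow> real) \<and> stoch2 n (\<tau> :: 'k \<Rightarrow> 'b list \<Rightarrow> 'a list \<Rightarrow> 'a::finite \<Rightarrow> real)}
    = (\<lambda>ps. (fst ps, swap_hist (snd ps))) ` {(\<pi>, \<sigma>). simplex \<pi> \<and> stoch1 n \<sigma>}"
proof (intro set_eqI iffI)
  fix z :: "('k \<Rightarrow> real) \<times> ('k \<Rightarrow> 'b list \<Rightarrow> 'a list \<Rightarrow> 'a \<Rightarrow> real)"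
  assume "z \<in> {(\<pi>, \<tau>). simplex \<pi> \<and> stoch2 n \<tau>}"
  then show "z \<in> (\<lambda>ps. (fst ps, swap_hist (snd ps))) ` {(\<pi>, \<sigma>). simplex \<pi> \<and> stoch1 n \<sigma>}"
    by (intro image_eqI[where x="(fst z, swap_hist (snd z))"]) (auto simp: stoch2_swap_hist[symmetric])
qed (auto simp: stoch2_swap_hist)

lemma cond_payoff_swap_roles:
  fixes M :: "'k::finite \<Rightarrow> 'l::finite \<Rightarrow> 'a::finite \<Rightarrow> 'b::finite \<Rightarrow> real"
  shows "cond_payoff (swap_roles M) n (swap_hist \<tau>) (swap_hist \<sigma>) l k = - cond_payoff M n \<sigma> \<tau> k l"
proof -
  have "cond_payoff (swap_roles M) n (swap_hist \<tau>) (swap_hist \<sigma>) l k =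
      (\<Sum>h\<in>histories n. reach (swap_hist \<tau>) (swap_hist \<sigma>) l k (snd h) (fst h) *
         (\<Sum>r<n. swap_roles M l k (snd h ! r) (fst h ! r)))"
    unfolding cond_payoff_def histories_swap[where 'a='a and 'b='b]
    by (subst sum.reindex) (auto simp: inj_on_def)
  also have "\<dots> = (\<Sum>h\<in>histories n. - (reach \<sigma> \<tau> k l (fst h) (snd h) * (\<Sum>r<n. M k l (fst h ! r) (snd h ! r))))"
    unfolding reach_def swap_hist_def swap_roles_def
    by (intro sum.cong refl) (simp add: mem_histories mult.commute sum_negf)
  also have "\<dots> = - cond_payoff M n \<sigma> \<tau> k l" unfolding cond_payoff_def by (simp add: sum_negf)
  finally show ?thesis .
qed

lemma dual2_payoff_swap_roles:
  fixes M :: "'k::finite \<Rightarrow> 'l::finite \<Rightarrow> 'a::finite \<Rightarrow> 'b::finite \<Rightarrow> real"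
  shows "dual2_payoff (swap_roles M) n q (\<lambda>k. - \<mu> k) (swap_hist \<tau>) \<pi> (swap_hist \<sigma>) = - dual1_payoff M n \<mu> q \<pi> \<sigma> \<tau>"
  unfolding dual2_payoff_def dual1_payoff_def cond_payoff_swap_roles
  by (simp add: sum_negf sum_subtractf sum.distrib algebra_simps)

lemma dual2_guarantee_swap_roles:
  fixes M :: "'k::finite \<Rightarrow> 'l::finite \<Rightarrow> 'a::finite \<Rightarrow> 'b::finite \<Rightarrow> real"
  shows "dual2_guarantee (swap_roles M) n q (\<lambda>k. - \<mu> k) (swap_hist \<tau>) = - dual1_guarantee M n \<mu> q \<tau>"
  unfolding dual2_guarantee_def dual1_guarantee_def stoch2_pairs_eq_swap_hist_image image_image
  by (simp add: dual2_payoff_swap_roles INF_uminus_real)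

lemma dual2_value_swap_roles:
  fixes M :: "'k::finite \<Rightarrow> 'l::finite \<Rightarrow> 'a::finite \<Rightarrow> 'b::finite \<Rightarrow> real"
  shows "dual2_value (swap_roles M) n q (\<lambda>k. - \<mu> k) = - dual1_value M n \<mu> q"
  unfolding dual2_value_def dual1_value_def stoch1_eq_swap_hist_image image_image dual2_guarantee_swap_roles
  by (simp add: SUP_uminus_real)

lemma dual2_upper_value_swap_roles:
  fixes M :: "'k::finite \<Rightarrow> 'l::finite \<Rightarrow> 'a::finite \<Rightarrow> 'b::finite \<Rightarrow> real"
  shows "dual2_upper_value (swap_roles M) n q (\<lambda>k. - \<mu> k) = - dual1_lower_value M n \<mu> q"
  unfolding dual2_upper_value_def dual1_lower_value_def stoch2_pairs_eq_swap_hist_image image_image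
    stoch1_eq_swap_hist_image
  by (simp add: dual2_payoff_swap_roles SUP_uminus_real INF_uminus_real)

lemma dual2_security_strategy_swap_roles:
  fixes M :: "'k::finite \<Rightarrow> 'l::finite \<Rightarrow> 'a::finite \<Rightarrow> 'b::finite \<Rightarrow> real"
  shows "dual2_security_strategy (swap_roles M) n q (\<lambda>k. - \<mu> k) (swap_hist \<tau>) \<longleftrightarrow> dual1_security_strategy M n \<mu> q \<tau>"
  unfolding dual2_security_strategy_def dual1_security_strategy_def dual2_guarantee_swap_roles
    dual2_value_swap_roles stoch1_swap_hist
  by simp

lemma lp2_feasible_swap_roles:
  fixes M :: "'k::finite \<Rightarrow> 'l::finite \<Rightarrow> 'a::finite \<Rightarrow> 'b::finite \<Rightarrow> real"
  shows "lp2_feasible (swap_roles M) n q (\<lambda>k. - \<mu> k) (swap_hist y) (swap_lp_var w) (\<lambda>k. - w0 k) (- wt)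
    \<longleftrightarrow> lp1_feasible M n \<mu> q y w w0 wt"
proof -
  have "(\<Sum>b\<in>UNIV. (\<Sum>l\<in>UNIV. swap_roles M l k b a * swap_hist y l hb ha b) + swap_lp_var w k hb ha b a)
      = - (\<Sum>b\<in>UNIV. (\<Sum>l\<in>UNIV. M k l a b * y l ha hb b) + w k ha hb a b)" for k a ha hb
    unfolding swap_roles_def swap_hist_def swap_lp_var_def by (simp add: sum_negf sum_subtractf sum.distrib)
  moreover have "(\<forall>k. - w0 k + - \<mu> k \<ge> - wt) \<longleftrightarrow> (\<forall>k. w0 k + \<mu> k \<le> wt)"
    by (auto simp: algebra_simps)
  ultimately show ?thesis
    unfolding lp2_feasible_def lp1_feasible_def realization_plan1_swap_hist
    by (auto simp: swap_lp_var_def)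
qed

theorem dual1_value_lp:
  fixes M :: "'k::finite \<Rightarrow> 'l::finite \<Rightarrow> 'a::finite \<Rightarrow> 'b::finite \<Rightarrow> real"
  assumes n: "1 \<le> n" and q: "simplex q"
  shows
    "dual1_lower_value M n \<mu> q = dual1_value M n \<mu> q
     \<and> (\<exists>y w w0. lp1_feasible M n \<mu> q y w w0 (dual1_value M n \<mu> q))
     \<and> (\<forall>y w w0 wt. lp1_feasible M n \<mu> q y w w0 wt \<longrightarrow> dual1_value M n \<mu> q \<le> wt)
     \<and> (\<forall>y w w0. lp1_feasible M n \<mu> q y w w0 (dual1_value M n \<mu> q) \<longrightarrow>
          dual1_security_strategy M n \<mu> q (strategy_of_plan2 q y)
          \<and> (\<forall>l b. q l > 0 \<longrightarrow> strategy_of_plan2 q y l [] [] b = y l [] [] b / q l))"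
proof -
  note swapped = dual2_value_lp[OF n q, of "swap_roles M" "\<lambda>k. - \<mu> k",
      unfolded dual2_value_swap_roles dual2_upper_value_swap_roles]
  show ?thesis
  proof (intro conjI allI impI)
    show "dual1_lower_value M n \<mu> q = dual1_value M n \<mu> q" using swapped by simp
    obtain x u u0 where "lp2_feasible (swap_roles M) n q (\<lambda>k. - \<mu> k) x u u0 (- dual1_value M n \<mu> q)"
      using swapped by blast
    then have "lp2_feasible (swap_roles M) n q (\<lambda>k. - \<mu> k) (swap_hist (swap_hist x))
        (swap_lp_var (swap_lp_var u)) (\<lambda>k. - (- u0 k)) (- dual1_value M n \<mu> q)"
      by simp
    then show "\<exists>y w w0. lp1_feasible M n \<mu> q y w w0 (dual1_value M n \<mu> q)"
      unfolding lp2_feasible_swap_roles by blast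
  next
    fix y w w0 wt assume "lp1_feasible M n \<mu> q y w w0 wt"
    then have "lp2_feasible (swap_roles M) n q (\<lambda>k. - \<mu> k) (swap_hist y) (swap_lp_var w) (\<lambda>k. - w0 k) (- wt)"
      unfolding lp2_feasible_swap_roles .
    then show "dual1_value M n \<mu> q \<le> wt" using swapped by force
  next
    fix y w w0 assume "lp1_feasible M n \<mu> q y w w0 (dual1_value M n \<mu> q)"
    then have "lp2_feasible (swap_roles M) n q (\<lambda>k. - \<mu> k) (swap_hist y) (swap_lp_var w) (\<lambda>k. - w0 k)
        (- dual1_value M n \<mu> q)"
      unfolding lp2_feasible_swap_roles .
    then have "dual2_security_strategy (swap_roles M) n q (\<lambda>k. - \<mu> k) (strategy_of_plan1 q (swap_hist y))"
      using swapped by blast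
    then show "dual1_security_strategy M n \<mu> q (strategy_of_plan2 q y)"
      unfolding strategy_of_plan1_swap_hist dual2_security_strategy_swap_roles .
  next
    fix y :: "'l \<Rightarrow> 'a list \<Rightarrow> 'b list \<Rightarrow> 'b \<Rightarrow> real" and l b assume "q l > 0"
    then show "strategy_of_plan2 q y l [] [] b = y l [] [] b / q l"
      unfolding strategy_of_plan2_def Let_def by simp
  qed
qed

theorem theorem2:
  fixes M :: "'k::finite \<Rightarrow> 'l::finite \<Rightarrow> 'a::finite \<Rightarrow> 'b::finite \<Rightarrow> real"
    and T t :: nat
    and p_t :: "'k \<Rightarrow> real" and \<nu>_t :: "'l \<Rightarrow> real"
    and \<mu>_t :: "'k \<Rightarrow> real" and q_t :: "'l \<Rightarrow> real"
  assumes "1 \<le> t" and "t \<le> T"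
    and "simplex p_t" and "simplex q_t"
  defines "n \<equiv> T + 1 - t"
  shows
    \<comment> \<open>(i) type 2 dual game\<close>
    "dual2_upper_value M n p_t \<nu>_t = dual2_value M n p_t \<nu>_t
     \<and> (\<exists>x u u0. lp2_feasible M n p_t \<nu>_t x u u0 (dual2_value M n p_t \<nu>_t))
     \<and> (\<forall>x u u0 ut. lp2_feasible M n p_t \<nu>_t x u u0 ut \<longrightarrow> ut \<le> dual2_value M n p_t \<nu>_t)
     \<and> (\<forall>x u u0. lp2_feasible M n p_t \<nu>_t x u u0 (dual2_value M n p_t \<nu>_t) \<longrightarrow>
          dual2_security_strategy M n p_t \<nu>_t (strategy_of_plan1 p_t x)
          \<and> (\<forall>k a. p_t k > 0 \<longrightarrow> strategy_of_plan1 p_t x k [] [] a = x k [] [] a / p_t k))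
     \<comment> \<open>(ii) type 1 dual game\<close>
     \<and> dual1_lower_value M n \<mu>_t q_t = dual1_value M n \<mu>_t q_t
     \<and> (\<exists>y w w0. lp1_feasible M n \<mu>_t q_t y w w0 (dual1_value M n \<mu>_t q_t))
     \<and> (\<forall>y w w0 wt. lp1_feasible M n \<mu>_t q_t y w w0 wt \<longrightarrow> dual1_value M n \<mu>_t q_t \<le> wt)
     \<and> (\<forall>y w w0. lp1_feasible M n \<mu>_t q_t y w w0 (dual1_value M n \<mu>_t q_t) \<longrightarrow>
          dual1_security_strategy M n \<mu>_t q_t (strategy_of_plan2 q_t y)
          \<and> (\<forall>l b. q_t l > 0 \<longrightarrow> strategy_of_plan2 q_t y l [] [] b = y l [] [] b / q_t l))"
proof -
  have "1 \<le> n" using assms(1,2) unfolding n_def by simp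
  then show ?thesis
    using dual2_value_lp[OF _ assms(3), of n M \<nu>_t] dual1_value_lp[OF _ assms(4), of n M \<mu>_t] by blast
qed

end
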